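(* Let $V$ be an optimal prefix-free machine, and for real $T>0$ let $\Theta_V(T)=\sum_{s\in\{0,1\}^*,\,H_V(s)<|s|}2^{-|s|/T}$. For every $T\in(0,1)$, if $\Theta_V(T)$ is right-computable, then $T$ is weakly Chaitin $T$-random.
   Context: $\{0,1\}^*$ is the set of finite binary strings; $|s|$ is the length of $s$. A prefix-free machine is a partial recursive function $C:\{0,1\}^*\to\{0,1\}^*$ whose domain is prefix-free. $H_C(s)=\min\{|p| : C(p)=s\}$ (possibly $\infty$). A prefix-free machine $U$ is optimal if for every prefix-free machine $C$ there is $d\in\mathbb{N}$ such that for every $p\in\mathrm{Dom}\,C$ there is $q\in\mathrm{Dom}\,U$ with $U(q)=C(p)$ and $|q|\le|p|+d$. A particular optimal prefix-free machine $U$ is fixed and $H(s):=H_U(s)$. For a real $\alpha$ and $n\ge1$, $\alpha\restriction n$ denotes the first $n$ bits of the base-two expansion of $\alpha-\lfloor\alpha\rfloor$ (the expansion with infinitely many zeros). A real $\alpha$ is right-computable if there is a total recursive $f:\mathbb{N}^+\to\mathbb{Q}$ with $\alpha\le f(n)$ for all $n$ and $\lim_n f(n)=\alpha$. For $T\in(0,1]$, $\alpha$ is weakly Chaitin $T$-random if there is $c\in\mathbb{N}$ with $Tn-c\le H(\alpha\restriction n)$ for all $n\in\mathbb{N}^+$. *)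

theory Defs
  imports "HOL-Analysis.Analysis" "HOL-Library.Extended_Nat"
begin

datatype recf =
    Zero
  | Succ
  | Proj nat
  | Comp recf "recf list"
  | PrimRec recf recf
  | Minimise recf

text \<open>reval c xs y: the function coded by c, applied to argument list xs, converges
  with value y.  (Extra arguments are ignored; this does not change the class of
  partial recursive functions.)\<close>
inductive reval :: "recf \<Rightarrow> nat list \<Rightarrow> nat \<Rightarrow> bool" where
  reval_zero: "reval Zero xs 0"
| reval_succ: "reval Succ (x # xs) (Suc x)"
| reval_proj: "i < length xs \<Longrightarrow> reval (Proj i) xs (xs ! i)"
| reval_comp: "length ys = length gs \<Longrightarrow> (\<forall>i < length gs. reval (gs ! i) xs (ys ! i))
      \<Longrightarrow> reval f ys z \<Longrightarrow> reval (Comp f gs) xs z"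
| reval_pr0: "reval f xs z \<Longrightarrow> reval (PrimRec f g) (0 # xs) z"
| reval_prS: "reval (PrimRec f g) (n # xs) y \<Longrightarrow> reval g (n # y # xs) z
      \<Longrightarrow> reval (PrimRec f g) (Suc n # xs) z"
| reval_mn: "reval f (n # xs) 0 \<Longrightarrow> (\<forall>m < n. \<exists>y. reval f (m # xs) (Suc y))
      \<Longrightarrow> reval (Minimise f) xs n"

definition partial_recursive :: "(nat \<Rightarrow> nat option) \<Rightarrow> bool" where
  "partial_recursive \<phi> \<longleftrightarrow> (\<exists>c. \<forall>x y. \<phi> x = Some y \<longleftrightarrow> reval c [x] y)"

definition total_recursive :: "(nat \<Rightarrow> nat) \<Rightarrow> bool" where
  "total_recursive g \<longleftrightarrow> partial_recursive (\<lambda>x. Some (g x))"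

text \<open>Binary strings are bool lists (True = 1).  Bijective encoding into nat.\<close>
fun str_enc :: "bool list \<Rightarrow> nat" where
  "str_enc [] = 0"
| "str_enc (b # bs) = 2 * str_enc bs + (if b then 2 else 1)"

definition partial_recursive_str :: "(bool list \<Rightarrow> bool list option) \<Rightarrow> bool" where
  "partial_recursive_str C \<longleftrightarrow>
     partial_recursive (\<lambda>x. map_option str_enc (C (inv str_enc x)))"

definition prefix_free :: "bool list set \<Rightarrow> bool" where
  "prefix_free A \<longleftrightarrow> (\<forall>p\<in>A. \<forall>q. p @ q \<in> A \<longrightarrow> q = [])"

definition prefix_free_machine :: "(bool list \<Rightarrow> bool list option) \<Rightarrow> bool" where
  "prefix_free_machine C \<longleftrightarrow> partial_recursive_str C \<and> prefix_free (dom C)"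

definition Hc :: "(bool list \<Rightarrow> bool list option) \<Rightarrow> bool list \<Rightarrow> enat" where
  "Hc C s = (INF p \<in> {p. C p = Some s}. enat (length p))"

definition optimal_machine :: "(bool list \<Rightarrow> bool list option) \<Rightarrow> bool" where
  "optimal_machine U \<longleftrightarrow> prefix_free_machine U \<and>
     (\<forall>C. prefix_free_machine C \<longrightarrow>
        (\<exists>d::nat. \<forall>p \<in> dom C. \<exists>q \<in> dom U. U q = C p \<and> length q \<le> length p + d))"

text \<open>First n bits of the base-two expansion of frac alpha (the expansion with
  infinitely many zeros): bit i (i = 1..n) is floor (frac alpha * 2^i) mod 2.\<close>
definition real_prefix :: "real \<Rightarrow> nat \<Rightarrow> bool list" where
  "real_prefix \<alpha> n = map (\<lambda>i. odd (\<lfloor>frac \<alpha> * 2 ^ Suc i\<rfloor>)) [0..<n]"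

definition computable_rat_seq :: "(nat \<Rightarrow> rat) \<Rightarrow> bool" where
  "computable_rat_seq f \<longleftrightarrow> (\<exists>a b c. total_recursive a \<and> total_recursive b \<and> total_recursive c \<and>
     (\<forall>n. f n = (of_int (int (a n) - int (b n))) / of_nat (Suc (c n))))"

definition right_computable :: "real \<Rightarrow> bool" where
  "right_computable \<alpha> \<longleftrightarrow> (\<exists>f. computable_rat_seq f \<and> (\<forall>n\<ge>1. \<alpha> \<le> of_rat (f n)) \<and>
     (\<lambda>n. of_rat (f n)) \<longlonglongrightarrow> \<alpha>)"

definition weakly_chaitin_random :: "(bool list \<Rightarrow> bool list option) \<Rightarrow> real \<Rightarrow> real \<Rightarrow> bool" where
  "weakly_chaitin_random U T \<alpha> \<longleftrightarrow>
     (\<exists>c::nat. \<forall>n\<ge>1. ereal (T * real n - real c) \<le>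
        (case Hc U (real_prefix \<alpha> n) of enat k \<Rightarrow> ereal (real k) | \<infinity> \<Rightarrow> \<infinity>))"

definition Theta :: "(bool list \<Rightarrow> bool list option) \<Rightarrow> real \<Rightarrow> real" where
  "Theta V T = infsum (\<lambda>s. 2 powr (- real (length s) / T)) {s. Hc V s < enat (length s)}"

end

theory Submission
  imports Defs "HOL-Library.Nat_Bijection"
begin

(*
  For T < 1 the series \<Theta>(u) converges for u slightly above T and its derivative is bounded
  there, so \<Theta>(u) - \<Theta>(T) \<le> C (u - T). The first n bits of T yield u \<ge> T with
  u - T \<le> 2^-n. Enumerating the compressible strings (those with H_V(s) < |s|) and the upper
  approximations of \<Theta>(T), one eventually finds a stage at which the enumerated part of \<Theta>(u)
  exceeds an upper bound for \<Theta>(T). Every string of length L \<approx> T (n - e) not yet enumerated at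
  that stage is then incompressible: otherwise its term 2^(-L/T) \<ge> 2^(e-n) > C 2^-n would
  push the enumerated part of \<Theta>(T) above \<Theta>(T). Hence a partial recursive map sends
  T \<restriction> n to a string s with |s| \<ge> Tn - O(1) and H_V(s) \<ge> |s|, and optimality of V
  bounds H_V(s) by H(T \<restriction> n) + O(1).
*)

section \<open>Closure properties of the partial recursive functions\<close>

inductive_cases reval_MinimiseE: "reval (Minimise f) xs n"
inductive_cases reval_CompE: "reval (Comp f gs) xs z"

lemma reval_deterministic: "reval c xs y \<Longrightarrow> reval c xs y' \<Longrightarrow> y' = y"
proof (induction arbitrary: y' rule: reval.induct)
  case (reval_zero xs) from reval_zero.prems show ?case by cases auto
next
  case (reval_succ x xs) from reval_succ.prems show ?case by cases auto
next
  case (reval_proj i xs) from reval_proj.prems show ?case by cases auto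
next
  case (reval_comp ys gs xs f z)
  from reval_comp.prems obtain ys' where ys': "length ys' = length gs"
     "\<forall>i<length gs. reval (gs ! i) xs (ys' ! i)" "reval f ys' y'"
    by cases auto
  have "ys' ! i = ys ! i" if "i < length gs" for i
    using ys'(2) reval_comp.IH that by blast
  then have "ys' = ys"
    using ys'(1) reval_comp.hyps(1) by (simp add: nth_equalityI)
  then show ?case using reval_comp ys' by auto
next
  case (reval_pr0 f xs z g)
  from reval_pr0.prems show ?case by cases (use reval_pr0.IH in auto)
next
  case (reval_prS f g n xs y z)
  from reval_prS.prems obtain y2 where "reval (PrimRec f g) (n # xs) y2" "reval g (n # y2 # xs) y'"
    by cases auto
  then show ?case using reval_prS.IH by metis
next
  case (reval_mn f n xs)
  from reval_mn.prems have "reval f (y' # xs) 0" "\<forall>m<y'. \<exists>y. reval f (m # xs) (Suc y)"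
    by (auto elim!: reval_MinimiseE)
  with reval_mn.IH show ?case
    by (metis Zero_not_Suc linorder_neqE_nat)
qed

lemma reval_comp1I: "reval g xs y \<Longrightarrow> reval f [y] z \<Longrightarrow> reval (Comp f [g]) xs z"
  by (rule reval_comp[where ys="[y]"]) auto

lemma reval_comp2I: "reval g xs y \<Longrightarrow> reval h xs y' \<Longrightarrow> reval f [y, y'] z
   \<Longrightarrow> reval (Comp f [g, h]) xs z"
  by (rule reval_comp[where ys="[y, y']"]) (auto simp: less_Suc_eq nth_Cons split: nat.split)

lemma reval_proj0: "reval (Proj 0) (x # xs) x"
  using reval_proj[of 0 "x # xs"] by simp
lemma reval_proj1: "reval (Proj 1) (x # y # xs) y"
  using reval_proj[of 1 "x # y # xs"] by simp
lemma reval_proj2: "reval (Proj 2) (x # y # z # xs) z"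
  using reval_proj[of 2 "x # y # z # xs"] by (simp add: numeral_2_eq_2)

definition add_code :: recf where "add_code = PrimRec (Proj 0) (Comp Succ [Proj 1])"

lemma reval_add_code: "reval add_code [a, b] (a + b)"
proof (induction a)
  case 0 show ?case unfolding add_code_def by (rule reval_pr0) (simp add: reval_proj0)
next
  case (Suc a)
  have "reval (Comp Succ [Proj 1]) [a, a + b, b] (Suc (a + b))"
    by (rule reval_comp1I[OF reval_proj1 reval_succ])
  then show ?case unfolding add_code_def
    using reval_prS[OF Suc[unfolded add_code_def]] by simp
qed

definition mult_code :: recf where "mult_code = PrimRec Zero (Comp add_code [Proj 1, Proj 2])"

lemma reval_mult_code: "reval mult_code [a, b] (a * b)"
proof (induction a)
  case 0 show ?case unfolding mult_code_def using reval_pr0[OF reval_zero] by simp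
next
  case (Suc a)
  have "reval (Comp add_code [Proj 1, Proj 2]) [a, a * b, b] (a * b + b)"
    by (rule reval_comp2I[OF reval_proj1 reval_proj2 reval_add_code])
  then show ?case unfolding mult_code_def
    using reval_prS[OF Suc[unfolded mult_code_def]] by (simp add: add.commute)
qed

definition pred_code :: recf where "pred_code = PrimRec Zero (Proj 0)"

lemma reval_pred_code: "reval pred_code [a] (a - 1)"
proof (induction a)
  case 0 then show ?case unfolding pred_code_def using reval_pr0[OF reval_zero] by simp
next
  case (Suc n)
  then show ?case
    unfolding pred_code_def using reval_prS[of Zero "Proj 0" n "[]" "n - 1" n] reval_proj0 by simp
qed

definition diff_code :: recf where "diff_code = PrimRec (Proj 0) (Comp pred_code [Proj 1])"

lemma reval_diff_code: "reval diff_code [a, b] (b - a)"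
proof (induction a)
  case 0 show ?case unfolding diff_code_def by (rule reval_pr0) (simp add: reval_proj0)
next
  case (Suc a)
  have "reval (Comp pred_code [Proj 1]) [a, b - a, b] (b - a - 1)"
    by (rule reval_comp1I[OF reval_proj1 reval_pred_code])
  then show ?case unfolding diff_code_def
    using reval_prS[OF Suc[unfolded diff_code_def]] by simp
qed

definition triangle_code :: recf where
  "triangle_code = PrimRec Zero (Comp add_code [Proj 1, Comp Succ [Proj 0]])"

lemma reval_triangle_code: "reval triangle_code [a] (triangle a)"
proof (induction a)
  case 0 show ?case unfolding triangle_code_def using reval_pr0[OF reval_zero] by simp
next
  case (Suc a)
  have "reval (Comp add_code [Proj 1, Comp Succ [Proj 0]]) [a, triangle a] (triangle a + Suc a)"
    by (rule reval_comp2I[OF reval_proj1 reval_comp1I[OF reval_proj0 reval_succ] reval_add_code])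
  then show ?case unfolding triangle_code_def
    using reval_prS[OF Suc[unfolded triangle_code_def]] by simp
qed

definition prod_encode_code :: recf where
  "prod_encode_code = Comp add_code [Comp triangle_code [add_code], Proj 0]"

lemma reval_prod_encode_code: "reval prod_encode_code [a, b] (prod_encode (a, b))"
  unfolding prod_encode_code_def prod_encode_def
  by (simp, rule reval_comp2I[OF reval_comp1I[OF reval_add_code reval_triangle_code]
        reval_proj0 reval_add_code])

primrec const_code :: "nat \<Rightarrow> recf" where
  "const_code 0 = Zero" | "const_code (Suc k) = Comp Succ [const_code k]"

lemma reval_const_code: "reval (const_code k) xs k"
  by (induction k) (auto intro: reval_zero reval_comp1I reval_succ)

definition computable :: "(nat \<Rightarrow> nat) \<Rightarrow> bool" where
  "computable f \<longleftrightarrow> (\<exists>c. \<forall>x. reval c [x] (f x))"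

definition computable2 :: "(nat \<Rightarrow> nat \<Rightarrow> nat) \<Rightarrow> bool" where
  "computable2 F \<longleftrightarrow> (\<exists>c. \<forall>a b. reval c [a, b] (F a b))"

definition decidable :: "(nat \<Rightarrow> bool) \<Rightarrow> bool" where
  "decidable P \<longleftrightarrow> computable (\<lambda>x. if P x then 1 else 0)"

lemma computable_if_total_recursive: "total_recursive g \<Longrightarrow> computable g"
  unfolding total_recursive_def partial_recursive_def computable_def by auto

lemma computable2_fst: "computable2 (\<lambda>a b. a)"
  unfolding computable2_def by (auto intro: reval_proj0)

lemma computable2_snd: "computable2 (\<lambda>a b. b)"
  unfolding computable2_def by (auto intro: reval_proj1)

lemma computable2_const: "computable2 (\<lambda>a b. k)"
  unfolding computable2_def by (auto intro: reval_const_code)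

lemma computable2_compose2:
  assumes "computable2 F" "computable2 G" "computable2 H"
  shows "computable2 (\<lambda>a b. F (G a b) (H a b))"
proof -
  obtain cF cG cH where "\<forall>a b. reval cF [a, b] (F a b)" "\<forall>a b. reval cG [a, b] (G a b)"
    "\<forall>a b. reval cH [a, b] (H a b)"
    using assms unfolding computable2_def by blast
  then have "reval (Comp cF [cG, cH]) [a, b] (F (G a b) (H a b))" for a b
    by (intro reval_comp2I) auto
  then show ?thesis unfolding computable2_def by blast
qed

lemma computable2_compose1:
  assumes "computable F" "computable2 G"
  shows "computable2 (\<lambda>a b. F (G a b))"
proof -
  obtain cF cG where "\<forall>a. reval cF [a] (F a)" "\<forall>a b. reval cG [a, b] (G a b)"
    using assms unfolding computable_def computable2_def by blast
  then have "reval (Comp cF [cG]) [a, b] (F (G a b))" for a b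
    by (intro reval_comp1I) auto
  then show ?thesis unfolding computable2_def by blast
qed

lemma computable2_add: "computable2 (+)"
  unfolding computable2_def using reval_add_code by blast

lemma computable2_mult: "computable2 (*)"
  unfolding computable2_def using reval_mult_code by blast

lemma computable2_diff: "computable2 (\<lambda>a b. a - b)"
proof -
  have "reval (Comp diff_code [Proj 1, Proj 0]) [a, b] (a - b)" for a b
    by (rule reval_comp2I[OF reval_proj1 reval_proj0 reval_diff_code])
  then show ?thesis unfolding computable2_def by blast
qed

lemma computable2_prod_encode: "computable2 (\<lambda>a b. prod_encode (a, b))"
  unfolding computable2_def using reval_prod_encode_code by blast

lemma computable_id: "computable (\<lambda>x. x)"
  unfolding computable_def by (auto intro: reval_proj0)

lemma computable_const: "computable (\<lambda>x. k)"
  unfolding computable_def by (auto intro: reval_const_code)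

lemma computable_apply2:
  assumes "computable2 F" "computable f" "computable g"
  shows "computable (\<lambda>x. F (f x) (g x))"
proof -
  obtain cF cf cg where "\<forall>a b. reval cF [a, b] (F a b)" "\<forall>a. reval cf [a] (f a)"
    "\<forall>a. reval cg [a] (g a)"
    using assms unfolding computable_def computable2_def by blast
  then have "reval (Comp cF [cf, cg]) [a] (F (f a) (g a))" for a
    by (intro reval_comp2I) auto
  then show ?thesis unfolding computable_def by blast
qed

lemma computable_compose:
  assumes "computable F" "computable f"
  shows "computable (\<lambda>x. F (f x))"
proof -
  obtain cF cf where "\<forall>a. reval cF [a] (F a)" "\<forall>a. reval cf [a] (f a)"
    using assms unfolding computable_def by blast
  then have "reval (Comp cF [cf]) [a] (F (f a))" for a
    by (intro reval_comp1I) auto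
  then show ?thesis unfolding computable_def by blast
qed

lemma computable_triangle: "computable f \<Longrightarrow> computable (\<lambda>x. triangle (f x))"
  using computable_compose[of triangle] reval_triangle_code unfolding computable_def by blast

lemma computable2_funpow:
  assumes "computable2 H" "computable f" "computable g"
  shows "computable (\<lambda>x. ((\<lambda>a. H a x) ^^ (f x)) (g x))"
proof -
  obtain cH where cH: "\<And>a b. reval cH [a, b] (H a b)"
    using assms(1) unfolding computable2_def by blast
  obtain cf where cf: "\<And>x. reval cf [x] (f x)" using assms(2) unfolding computable_def by blast
  obtain cg where cg: "\<And>x. reval cg [x] (g x)" using assms(3) unfolding computable_def by blast
  define iter_code where "iter_code = PrimRec cg (Comp cH [Proj 1, Proj 2])"
  have iter: "reval iter_code [n, x] (((\<lambda>a. H a x) ^^ n) (g x))" for n x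
  proof (induction n)
    case 0 show ?case unfolding iter_code_def using reval_pr0[OF cg] by simp
  next
    case (Suc n)
    have "reval (Comp cH [Proj 1, Proj 2]) [n, ((\<lambda>a. H a x) ^^ n) (g x), x]
            (H (((\<lambda>a. H a x) ^^ n) (g x)) x)"
      by (rule reval_comp2I[OF reval_proj1 reval_proj2 cH])
    then show ?case
      using reval_prS[OF Suc[unfolded iter_code_def]] unfolding iter_code_def by simp
  qed
  have "reval (Comp iter_code [cf, Proj 0]) [x] (((\<lambda>a. H a x) ^^ (f x)) (g x))" for x
    by (rule reval_comp2I[OF cf reval_proj0 iter])
  then show ?thesis unfolding computable_def by blast
qed

lemma computable_add: "computable f \<Longrightarrow> computable g \<Longrightarrow> computable (\<lambda>x. f x + g x)"
  using computable_apply2[OF computable2_add] .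

lemma computable_mult: "computable f \<Longrightarrow> computable g \<Longrightarrow> computable (\<lambda>x. f x * g x)"
  using computable_apply2[OF computable2_mult] .

lemma computable_diff: "computable f \<Longrightarrow> computable g \<Longrightarrow> computable (\<lambda>x. f x - g x)"
  using computable_apply2[OF computable2_diff] .

lemma computable_prod_encode:
  "computable f \<Longrightarrow> computable g \<Longrightarrow> computable (\<lambda>x. prod_encode (f x, g x))"
  using computable_apply2[OF computable2_prod_encode] .

lemma computable_Suc: "computable f \<Longrightarrow> computable (\<lambda>x. Suc (f x))"
  using computable_add[OF _ computable_const[of 1]] by simp

text \<open>The inverse of the triangular numbers, computed by a bounded upward search.\<close>
definition triangle_root_step :: "nat \<Rightarrow> nat \<Rightarrow> nat" where
  "triangle_root_step a z = a + (1 - (triangle (Suc a) - z))"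

definition triangle_root :: "nat \<Rightarrow> nat" where
  "triangle_root z = ((\<lambda>a. triangle_root_step a z) ^^ z) 0"

lemma triangle_root_step_eq:
  "triangle_root_step a z = (if z < triangle (Suc a) then a else Suc a)"
  unfolding triangle_root_step_def by auto

lemma triangle_root_step_invariant:
  "triangle (((\<lambda>a. triangle_root_step a z) ^^ k) 0) \<le> z \<and>
   (((\<lambda>a. triangle_root_step a z) ^^ k) 0 = k \<or>
     z < triangle (Suc (((\<lambda>a. triangle_root_step a z) ^^ k) 0)))"
  by (induction k) (auto simp: triangle_root_step_eq simp del: triangle_Suc)

lemma triangle_root_bounds: "triangle (triangle_root z) \<le> z \<and> z < triangle (Suc (triangle_root z))"
proof -
  have "z < triangle (Suc z)" by simp
  then show ?thesis using triangle_root_step_invariant[of z z] unfolding triangle_root_def by auto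
qed

abbreviation pair_fst :: "nat \<Rightarrow> nat" where "pair_fst z \<equiv> fst (prod_decode z)"

abbreviation pair_snd :: "nat \<Rightarrow> nat" where "pair_snd z \<equiv> snd (prod_decode z)"

lemma prod_decode_triangle_root:
  "prod_decode z = (z - triangle (triangle_root z),
      triangle_root z - (z - triangle (triangle_root z)))"
proof -
  let ?s = "triangle_root z"
  have "triangle ?s \<le> z" "z < triangle ?s + Suc ?s" using triangle_root_bounds[of z] by auto
  then have "prod_encode (z - triangle ?s, ?s - (z - triangle ?s)) = z"
    unfolding prod_encode_def by auto
  then show ?thesis by (metis prod_encode_inverse)
qed

lemma computable_triangle_root: "computable triangle_root"
proof -
  have "computable2 triangle_root_step"
    unfolding triangle_root_step_def
    by (intro computable2_compose2[OF computable2_add] computable2_compose2[OF computable2_diff]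
          computable2_compose1[OF computable_triangle[OF computable_id]]
          computable2_compose1[OF computable_Suc[OF computable_id]]
          computable2_fst computable2_snd computable2_const)
  then show ?thesis
    unfolding triangle_root_def using computable2_funpow[OF _ computable_id computable_const]
    by blast
qed

lemma computable_pair_fst: "computable f \<Longrightarrow> computable (\<lambda>x. pair_fst (f x))"
  unfolding prod_decode_triangle_root fst_conv
  by (intro computable_diff computable_triangle computable_compose[OF computable_triangle_root])

lemma computable_pair_snd: "computable f \<Longrightarrow> computable (\<lambda>x. pair_snd (f x))"
  unfolding prod_decode_triangle_root snd_conv
  by (intro computable_diff computable_triangle computable_compose[OF computable_triangle_root])

lemma computable2_if_computable_uncurried:
  assumes "computable (\<lambda>p. F (pair_fst p) (pair_snd p))"
  shows "computable2 F"
  using computable2_compose1[OF assms computable2_prod_encode] by simp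

lemma computable_apply_uncurried:
  "computable (\<lambda>p. F (pair_fst p) (pair_snd p)) \<Longrightarrow>
   computable f \<Longrightarrow> computable g \<Longrightarrow> computable (\<lambda>x. F (f x) (g x))"
  using computable_apply2[OF computable2_if_computable_uncurried] by blast

lemma computable_funpow:
  assumes "computable (\<lambda>p. S (pair_fst p) (pair_snd p))" "computable f" "computable g"
  shows "computable (\<lambda>x. ((\<lambda>a. S a x) ^^ (f x)) (g x))"
  using computable2_funpow[OF computable2_if_computable_uncurried[OF assms(1)] assms(2,3)] .

lemma decidable_less: "computable f \<Longrightarrow> computable g \<Longrightarrow> decidable (\<lambda>x. f x < g x)"
proof -
  assume "computable f" "computable g"
  then have "computable (\<lambda>x. 1 - (1 - (g x - f x)))" by (intro computable_diff computable_const)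
  moreover have "(\<lambda>x. 1 - (1 - (g x - f x))) = (\<lambda>x. if f x < g x then 1 else 0)" by auto
  ultimately show ?thesis unfolding decidable_def by simp
qed

lemma decidable_not: "decidable P \<Longrightarrow> decidable (\<lambda>x. \<not> P x)"
proof -
  assume "decidable P"
  then have "computable (\<lambda>x. 1 - (if P x then 1 else 0))"
    unfolding decidable_def by (intro computable_diff computable_const)
  moreover have "(\<lambda>x. 1 - (if P x then 1 else 0)) = (\<lambda>x. if \<not> P x then 1 else (0::nat))" by auto
  ultimately show ?thesis unfolding decidable_def by simp
qed

lemma decidable_conj: "decidable P \<Longrightarrow> decidable Q \<Longrightarrow> decidable (\<lambda>x. P x \<and> Q x)"
proof -
  assume "decidable P" "decidable Q"
  then have "computable (\<lambda>x. (if P x then 1 else 0) * (if Q x then 1 else 0))"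
    unfolding decidable_def by (intro computable_mult)
  moreover have "(\<lambda>x. (if P x then 1 else 0) * (if Q x then 1 else 0)) =
      (\<lambda>x. if P x \<and> Q x then 1 else (0::nat))" by auto
  ultimately show ?thesis unfolding decidable_def by simp
qed

lemma decidable_disj: "decidable P \<Longrightarrow> decidable Q \<Longrightarrow> decidable (\<lambda>x. P x \<or> Q x)"
  using decidable_not[OF decidable_conj[OF decidable_not decidable_not]] by simp

lemma decidable_le: "computable f \<Longrightarrow> computable g \<Longrightarrow> decidable (\<lambda>x. f x \<le> g x)"
  using decidable_not[OF decidable_less] by (simp add: not_less)

lemma decidable_eq: "computable f \<Longrightarrow> computable g \<Longrightarrow> decidable (\<lambda>x. f x = g x)"
  using decidable_conj[OF decidable_le decidable_le] by (simp add: order_eq_iff)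

lemma computable_if:
  assumes "decidable P" "computable f" "computable g"
  shows "computable (\<lambda>x. if P x then f x else g x)"
proof -
  have "computable (\<lambda>x. (if P x then 1 else 0) * f x + (1 - (if P x then 1 else 0)) * g x)"
    using assms unfolding decidable_def
    by (intro computable_add computable_mult computable_diff computable_const)
  moreover have "(\<lambda>x. (if P x then 1 else 0) * f x + (1 - (if P x then 1 else 0)) * g x) =
     (\<lambda>x. if P x then f x else g x)" by auto
  ultimately show ?thesis by simp
qed

lemma decidable_apply_uncurried:
  "decidable (\<lambda>p. P (pair_fst p) (pair_snd p)) \<Longrightarrow>
   computable f \<Longrightarrow> computable g \<Longrightarrow> decidable (\<lambda>x. P (f x) (g x))"
  unfolding decidable_def using computable_apply_uncurried[of "\<lambda>a b. if P a b then 1 else 0" f g]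
  by simp

lemma computable_power: "computable f \<Longrightarrow> computable g \<Longrightarrow> computable (\<lambda>x. f x ^ g x)"
proof -
  assume f: "computable f" and g: "computable g"
  have "computable (\<lambda>x. ((\<lambda>a. a * f x) ^^ (g x)) 1)"
    by (intro computable_funpow computable_mult computable_pair_fst computable_pair_snd computable_id
        computable_compose[OF f] computable_const g)
  moreover have "((\<lambda>a. a * y) ^^ n) 1 = y ^ n" for y n :: nat
    by (induction n) (auto simp: mult.commute)
  ultimately show ?thesis by simp
qed

lemma computable_sum:
  assumes "computable (\<lambda>p. S (pair_fst p) (pair_snd p))" "computable f"
  shows "computable (\<lambda>x. \<Sum>i<f x. S i x)"
proof -
  let ?step = "\<lambda>a x. prod_encode (Suc (pair_fst a),
                    pair_snd a + S (pair_fst a) x)"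
  have "computable (\<lambda>x. pair_snd (((\<lambda>a. ?step a x) ^^ (f x)) (prod_encode (0, 0))))"
    by (intro computable_pair_snd computable_funpow computable_prod_encode computable_Suc computable_pair_fst
        computable_add computable_id computable_const assms(2)
        computable_apply_uncurried[OF assms(1)] computable_pair_snd)
  moreover have "((\<lambda>a. ?step a x) ^^ n) (prod_encode (0, 0)) = prod_encode (n, \<Sum>i<n. S i x)" for n x
    by (induction n) auto
  ultimately show ?thesis by simp
qed

lemma decidable_bounded_ex:
  assumes "decidable (\<lambda>p. P (pair_fst p) (pair_snd p))" "computable f"
  shows "decidable (\<lambda>x. \<exists>i<f x. P i x)"
proof -
  have "computable (\<lambda>x. \<Sum>i<f x. if P i x then 1 else 0)"
    using assms unfolding decidable_def by (intro computable_sum) simp_all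
  then have "decidable (\<lambda>x. 0 < (\<Sum>i<f x. if P i x then 1 else (0::nat)))"
    by (intro decidable_less computable_const)
  moreover have "(0 < (\<Sum>i<n. if P i x then 1 else (0::nat))) = (\<exists>i<n. P i x)" for n x
    by (induction n) (auto simp: less_Suc_eq)
  ultimately show ?thesis by simp
qed

definition bounded_min :: "nat \<Rightarrow> (nat \<Rightarrow> bool) \<Rightarrow> nat" where
  "bounded_min b P = (if \<exists>i<b. P i then LEAST i. P i else b)"

lemma bounded_min_funpow: "((\<lambda>a. if P a then a else Suc a) ^^ k) 0 = bounded_min k P"
proof (induction k)
  case 0 then show ?case by (simp add: bounded_min_def)
next
  case (Suc k)
  show ?case
  proof (cases "\<exists>i<k. P i")
    case True
    then have "P (LEAST i. P i)" "(LEAST i. P i) < k"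
      by (metis LeastI) (meson True Least_le order.strict_trans1)
    then show ?thesis using Suc True by (auto simp: bounded_min_def less_Suc_eq)
  next
    case False
    then have "(LEAST i. P i) = k" if "P k" using that by (metis Least_equality not_less)
    then show ?thesis using Suc False by (auto simp: bounded_min_def less_Suc_eq)
  qed
qed

lemma bounded_min_correct:
  "\<exists>i<b. P i \<Longrightarrow> P (bounded_min b P) \<and> bounded_min b P < b \<and> (\<forall>j<bounded_min b P. \<not> P j)"
  unfolding bounded_min_def
  by (auto intro: LeastI dest: not_less_Least) (meson Least_le order.strict_trans1)

lemma computable_bounded_min:
  assumes "decidable (\<lambda>p. P (pair_fst p) (pair_snd p))" "computable f"
  shows "computable (\<lambda>x. bounded_min (f x) (\<lambda>i. P i x))"
proof -
  have "computable (\<lambda>x. ((\<lambda>a. if P a x then a else Suc a) ^^ (f x)) 0)"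
    using assms
    by (intro computable_funpow computable_if computable_pair_fst computable_Suc computable_id
        computable_const) auto
  then show ?thesis by (simp add: bounded_min_funpow)
qed

lemma computable_div: "computable f \<Longrightarrow> computable g \<Longrightarrow> computable (\<lambda>x. f x div g x)"
proof -
  assume f: "computable f" and g: "computable g"
  have "computable (\<lambda>x. if g x = 0 then 0 else bounded_min (Suc (f x)) (\<lambda>q. f x < (q + 1) * g x))"
    by (intro computable_if decidable_eq computable_bounded_min decidable_less computable_mult
        computable_add computable_Suc computable_pair_fst computable_pair_snd computable_const computable_id
        computable_compose[OF f] computable_compose[OF g] f g)
  moreover have div_as_min: "bounded_min (Suc a) (\<lambda>q. a < (q + 1) * b) = a div b"
    if "0 < b" for a b :: nat
  proof -
    let ?q = "bounded_min (Suc a) (\<lambda>q. a < (q + 1) * b)"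
    have div: "a < (a div b + 1) * b" using that
      by (metis add.commute dividend_less_div_times mult.commute mult_Suc_right plus_1_eq_Suc)
    moreover have "a div b < Suc a" by (simp add: le_imp_less_Suc)
    ultimately have "\<exists>i<Suc a. a < (i + 1) * b" by blast
    from bounded_min_correct[OF this]
    have q: "a < (?q + 1) * b" "\<forall>j<?q. \<not> a < (j + 1) * b" by auto
    have "\<not> a div b < ?q" using q(2) div by blast
    moreover have "\<not> ?q < a div b"
    proof
      assume "?q < a div b"
      then have "(?q + 1) * b \<le> (a div b) * b" by (intro mult_le_mono1) simp
      also have "\<dots> \<le> a" by (simp add: div_times_less_eq_dividend)
      finally show False using q(1) by simp
    qed
    ultimately show ?thesis by simp
  qed
  moreover have "(\<lambda>x. if g x = 0 then 0 else bounded_min (Suc (f x)) (\<lambda>q. f x < (q + 1) * g x))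
      = (\<lambda>x. f x div g x)"
    using div_as_min by (auto simp: fun_eq_iff)
  ultimately show ?thesis by simp
qed

lemma computable_mod: "computable f \<Longrightarrow> computable g \<Longrightarrow> computable (\<lambda>x. f x mod g x)"
  using computable_diff[of f "\<lambda>x. g x * (f x div g x)"] computable_mult computable_div
  by (simp add: minus_mult_div_eq_mod)

definition list_tl_code :: "nat \<Rightarrow> nat" where
  "list_tl_code z = (if z = 0 then 0 else pair_snd (z - 1))"

definition list_hd_code :: "nat \<Rightarrow> nat" where
  "list_hd_code z = pair_fst (z - 1)"

lemma list_tl_code_list_encode [simp]: "list_tl_code (list_encode xs) = list_encode (tl xs)"
  by (cases xs) (auto simp: list_tl_code_def)

lemma list_hd_code_list_encode [simp]: "list_hd_code (list_encode (x # xs)) = x"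
  by (simp add: list_hd_code_def)

lemma list_tl_code_Suc [simp]: "list_tl_code (Suc (prod_encode (x, y))) = y"
  by (simp add: list_tl_code_def)

lemma list_hd_code_Suc [simp]: "list_hd_code (Suc (prod_encode (x, y))) = x"
  by (simp add: list_hd_code_def)

lemma funpow_list_tl_code: "(list_tl_code ^^ i) (list_encode xs) = list_encode (drop i xs)"
  by (induction i arbitrary: xs) (auto simp: funpow_Suc_right drop_Suc drop_tl)

lemma computable_list_tl_code: "computable f \<Longrightarrow> computable (\<lambda>x. list_tl_code (f x))"
  unfolding list_tl_code_def
  by (intro computable_if decidable_eq computable_pair_snd computable_diff computable_const)

lemma computable_list_hd_code: "computable f \<Longrightarrow> computable (\<lambda>x. list_hd_code (f x))"
  unfolding list_hd_code_def by (intro computable_pair_fst computable_diff computable_const)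

lemma computable_funpow_list_tl_code:
  "computable f \<Longrightarrow> computable g \<Longrightarrow> computable (\<lambda>x. (list_tl_code ^^ f x) (g x))"
  using computable_funpow[of "\<lambda>a x. list_tl_code a"]
  by (simp add: computable_list_tl_code computable_pair_fst computable_id)

section \<open>Evaluation with fuel\<close>

primrec iterate_option :: "nat option \<Rightarrow> (nat \<Rightarrow> nat \<Rightarrow> nat option) \<Rightarrow> nat \<Rightarrow> nat option" where
  "iterate_option a G 0 = a"
| "iterate_option a G (Suc n) = (case iterate_option a G n of None \<Rightarrow> None | Some y \<Rightarrow> G n y)"

primrec min_search :: "(nat \<Rightarrow> nat option) \<Rightarrow> nat \<Rightarrow> nat \<Rightarrow> nat option" where
  "min_search F m 0 = None"
| "min_search F m (Suc k) =
     (case F m of None \<Rightarrow> None | Some 0 \<Rightarrow> Some m | Some (Suc _) \<Rightarrow> min_search F (Suc m) k)"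

text \<open>The fuel t only bounds the length of each minimisation search, so a convergent
  computation is reproduced by every sufficiently large fuel.\<close>
primrec eval_fuel :: "recf \<Rightarrow> nat \<Rightarrow> nat list \<Rightarrow> nat option" where
  "eval_fuel Zero t xs = Some 0"
| "eval_fuel Succ t xs = (case xs of [] \<Rightarrow> None | x # _ \<Rightarrow> Some (Suc x))"
| "eval_fuel (Proj i) t xs = (if i < length xs then Some (xs ! i) else None)"
| "eval_fuel (Comp f gs) t xs = (let rs = map (\<lambda>g. eval_fuel g t xs) gs in
      if None \<in> set rs then None else eval_fuel f t (map the rs))"
| "eval_fuel (PrimRec f g) t xs = (case xs of [] \<Rightarrow> None
      | n # ys \<Rightarrow> iterate_option (eval_fuel f t ys) (\<lambda>i y. eval_fuel g t (i # y # ys)) n)"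
| "eval_fuel (Minimise f) t xs = min_search (\<lambda>m. eval_fuel f t (m # xs)) 0 t"

lemma min_search_sound: "min_search F m k = Some n \<Longrightarrow>
    m \<le> n \<and> F n = Some 0 \<and> (\<forall>j. m \<le> j \<and> j < n \<longrightarrow> (\<exists>y. F j = Some (Suc y)))"
proof (induction k arbitrary: m)
  case 0 then show ?case by simp
next
  case (Suc k)
  show ?case
  proof (cases "F m")
    case None then show ?thesis using Suc.prems by simp
  next
    case (Some v)
    show ?thesis
    proof (cases v)
      case 0 then have "n = m" using Suc.prems Some by simp
      then show ?thesis using Some 0 by auto
    next
      case (Suc w)
      then have "min_search F (Suc m) k = Some n" using Suc.prems Some by simp
      then have h: "Suc m \<le> n \<and> F n = Some 0 \<and> (\<forall>j. Suc m \<le> j \<and> j < n \<longrightarrow> (\<exists>y. F j = Some (Suc y)))"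
        by (rule Suc.IH)
      have "\<forall>j. m \<le> j \<and> j < n \<longrightarrow> (\<exists>y. F j = Some (Suc y))"
      proof (intro allI impI)
        fix j assume j: "m \<le> j \<and> j < n"
        show "\<exists>y. F j = Some (Suc y)"
        proof (cases "j = m")
          case True then show ?thesis using Some Suc by simp
        next
          case False then show ?thesis using h j by simp
        qed
      qed
      then show ?thesis using h by simp
    qed
  qed
qed

lemma eval_fuel_sound: "eval_fuel c t xs = Some y \<Longrightarrow> reval c xs y"
proof (induction c arbitrary: xs y)
  case Zero then show ?case by (auto intro: reval_zero)
next
  case Succ then show ?case by (auto split: list.splits intro: reval_succ)
next
  case (Proj i) then show ?case by (auto split: if_splits intro: reval_proj)
next
  case (Comp f gs)
  let ?rs = "map (\<lambda>g. eval_fuel g t xs) gs"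
  have nn: "None \<notin> set ?rs" and ev: "eval_fuel f t (map the ?rs) = Some y"
    using Comp.prems by (auto simp: Let_def split: if_splits)
  show ?case
  proof (rule reval_comp[where ys="map the ?rs"])
    show "length (map the ?rs) = length gs" by simp
    show "reval f (map the ?rs) y" using Comp.IH(1) ev by blast
    show "\<forall>i<length gs. reval (gs ! i) xs (map the ?rs ! i)"
    proof (intro allI impI)
      fix i assume i: "i < length gs"
      have "?rs ! i \<in> set ?rs" using i by (intro nth_mem) simp
      then have "?rs ! i \<noteq> None" using nn by metis
      then have "eval_fuel (gs ! i) t xs \<noteq> None" using i by simp
      then have "eval_fuel (gs ! i) t xs = Some (map the ?rs ! i)" using i by auto
      then show "reval (gs ! i) xs (map the ?rs ! i)" using Comp.IH(2) i by (meson nth_mem)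
    qed
  qed
next
  case (PrimRec f g)
  obtain n ys where xs: "xs = n # ys" using PrimRec.prems by (cases xs) auto
  have "iterate_option (eval_fuel f t ys) (\<lambda>i y. eval_fuel g t (i # y # ys)) n = Some z \<Longrightarrow>
      reval (PrimRec f g) (n # ys) z" for z
  proof (induction n arbitrary: z)
    case 0 then show ?case using PrimRec.IH(1) reval_pr0 by simp
  next
    case (Suc n)
    then obtain y' where "iterate_option (eval_fuel f t ys) (\<lambda>i y. eval_fuel g t (i # y # ys)) n
        = Some y'"
       "eval_fuel g t (n # y' # ys) = Some z" by (auto split: option.splits)
    then show ?case using Suc.IH PrimRec.IH(2) reval_prS by blast
  qed
  then show ?case using PrimRec.prems xs by simp
next
  case (Minimise f)
  have m: "min_search (\<lambda>m. eval_fuel f t (m # xs)) 0 t = Some y" using Minimise.prems by simp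
  from min_search_sound[OF m]
  have "eval_fuel f t (y # xs) = Some 0" "\<forall>j<y. \<exists>v. eval_fuel f t (j # xs) = Some (Suc v)"
    by simp_all
  then have "reval f (y # xs) 0" "\<forall>j<y. \<exists>v. reval f (j # xs) (Suc v)" using Minimise.IH by blast+
  then show ?case by (rule reval_mn)
qed

lemma min_search_complete: "m \<le> n \<Longrightarrow> n < m + k \<Longrightarrow> F n = Some 0 \<Longrightarrow>
   (\<forall>j. m \<le> j \<and> j < n \<longrightarrow> (\<exists>y. F j = Some (Suc y))) \<Longrightarrow> min_search F m k = Some n"
proof (induction k arbitrary: m)
  case 0 then show ?case by simp
next
  case (Suc k)
  show ?case
  proof (cases "m = n")
    case True then show ?thesis using Suc.prems by simp
  next
    case False
    then have mn: "m < n" using Suc.prems by simp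
    then obtain y where y: "F m = Some (Suc y)" using Suc.prems(4) by blast
    have "min_search F (Suc m) k = Some n"
      using mn Suc.prems by (intro Suc.IH) auto
    then show ?thesis using y by simp
  qed
qed

lemma eval_fuel_eventually: "reval c xs y \<Longrightarrow> \<forall>\<^sub>F t in sequentially. eval_fuel c t xs = Some y"
proof (induction rule: reval.induct)
  case (reval_comp ys gs xs f z)
  have "\<forall>\<^sub>F t in sequentially. \<forall>i\<in>{..<length gs}. eval_fuel (gs ! i) t xs = Some (ys ! i)"
    using reval_comp.IH(1) by (intro eventually_ball_finite) auto
  then show ?case using reval_comp.IH(2)
  proof eventually_elim
    case (elim t)
    then have "map (\<lambda>g. eval_fuel g t xs) gs = map Some ys"
      using reval_comp.hyps by (intro nth_equalityI) auto
    then show ?case using elim by (simp add: Let_def)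
  qed
next
  case (reval_prS f g n xs y z)
  from reval_prS.IH show ?case by eventually_elim simp
next
  case (reval_mn f n xs)
  have "\<forall>j\<in>{..<n}. \<forall>\<^sub>F t in sequentially. \<exists>y. eval_fuel f t (j # xs) = Some (Suc y)"
  proof
    fix j assume "j \<in> {..<n}"
    then obtain y where "\<forall>\<^sub>F t in sequentially. eval_fuel f t (j # xs) = Some (Suc y)"
      using reval_mn.IH(2) by auto
    then show "\<forall>\<^sub>F t in sequentially. \<exists>y. eval_fuel f t (j # xs) = Some (Suc y)"
      by (rule eventually_mono) blast
  qed
  then have "\<forall>\<^sub>F t in sequentially. \<forall>j\<in>{..<n}. \<exists>y. eval_fuel f t (j # xs) = Some (Suc y)"
    by (intro eventually_ball_finite) simp_all
  with reval_mn.IH(1) eventually_gt_at_top[of n] show ?case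
  proof eventually_elim
    case (elim t)
    then have "min_search (\<lambda>m. eval_fuel f t (m # xs)) 0 t = Some n"
      by (intro min_search_complete) auto
    then show ?case by simp
  qed
qed simp_all

primrec encode_option :: "nat option \<Rightarrow> nat" where
  "encode_option None = 0"
| "encode_option (Some y) = Suc y"

definition eval_fuel_code :: "recf \<Rightarrow> nat \<Rightarrow> nat" where
  "eval_fuel_code c p = encode_option (eval_fuel c (pair_fst p) (list_decode (pair_snd p)))"

lemma eval_fuel_code_encode:
  "eval_fuel_code c (prod_encode (t, list_encode xs)) = encode_option (eval_fuel c t xs)"
  by (simp add: eval_fuel_code_def)

lemma eval_fuel_code_cases:
  obtains t xs where "p = prod_encode (t, list_encode xs)"
  by (metis list_decode_inverse prod_decode_inverse surj_pair)

primrec eval_args_code :: "recf list \<Rightarrow> nat \<Rightarrow> nat" where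
  "eval_args_code [] p = 1"
| "eval_args_code (g # gs) p =
     (if eval_fuel_code g p = 0 \<or> eval_args_code gs p = 0 then 0
      else Suc (Suc (prod_encode (eval_fuel_code g p - 1, eval_args_code gs p - 1))))"

lemma eval_args_code_encode:
  "eval_args_code gs (prod_encode (t, list_encode xs)) =
     (if None \<in> set (map (\<lambda>g. eval_fuel g t xs) gs) then 0
      else Suc (list_encode (map the (map (\<lambda>g. eval_fuel g t xs) gs))))"
proof (induction gs)
  case (Cons g gs)
  then show ?case by (cases "eval_fuel g t xs") (auto simp: eval_fuel_code_encode)
qed simp

lemma computable_eval_args_code:
  "(\<And>g. g \<in> set gs \<Longrightarrow> computable (eval_fuel_code g)) \<Longrightarrow> computable (eval_args_code gs)"
proof (induction gs)
  case Nil then show ?case by (simp add: computable_const)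
next
  case (Cons g gs)
  have g: "computable (eval_fuel_code g)" and gs: "computable (eval_args_code gs)"
    using Cons by auto
  show ?case unfolding eval_args_code.simps
    by (intro computable_if decidable_disj decidable_eq computable_Suc computable_prod_encode
        computable_diff computable_const computable_compose[OF g] computable_compose[OF gs]
        computable_id)
qed

lemma eval_fuel_code_Succ:
  "eval_fuel_code Succ p = (if pair_snd p = 0 then 0 else Suc (Suc (list_hd_code (pair_snd p))))"
proof -
  obtain xs where "pair_snd p = list_encode xs" by (metis list_decode_inverse)
  then show ?thesis unfolding eval_fuel_code_def by (cases xs) auto
qed

lemma eval_fuel_code_Proj:
  "eval_fuel_code (Proj i) p =
     (if (list_tl_code ^^ i) (pair_snd p) = 0 then 0
      else Suc (list_hd_code ((list_tl_code ^^ i) (pair_snd p))))"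
proof -
  obtain xs where xs: "pair_snd p = list_encode xs" by (metis list_decode_inverse)
  show ?thesis
  proof (cases "i < length xs")
    case True
    then have "drop i xs = xs ! i # drop (Suc i) xs" by (rule Cons_nth_drop_Suc[symmetric])
    then show ?thesis unfolding eval_fuel_code_def xs funpow_list_tl_code using True by simp
  qed (simp add: eval_fuel_code_def xs funpow_list_tl_code)
qed

lemma eval_fuel_code_Comp:
  "eval_fuel_code (Comp f gs) p =
     (if eval_args_code gs p = 0 then 0
      else eval_fuel_code f (prod_encode (pair_fst p, eval_args_code gs p - 1)))"
  by (cases p rule: eval_fuel_code_cases) (simp add: eval_fuel_code_encode eval_args_code_encode
      Let_def)

text \<open>One step of primitive recursion on the pair (i, code of the value at i).\<close>
definition prim_rec_step :: "recf \<Rightarrow> nat \<Rightarrow> nat \<Rightarrow> nat" where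
  "prim_rec_step g p a = prod_encode (Suc (pair_fst a),
     if pair_snd a = 0 then 0
     else eval_fuel_code g (prod_encode (pair_fst p,
            Suc (prod_encode (pair_fst a, Suc (prod_encode (pair_snd a - 1,
                list_tl_code (pair_snd p))))))))"

lemma eval_fuel_code_PrimRec:
  "eval_fuel_code (PrimRec f g) p =
     (if pair_snd p = 0 then 0
      else pair_snd (((\<lambda>a. prim_rec_step g p a) ^^ list_hd_code (pair_snd p))
        (prod_encode (0, eval_fuel_code f (prod_encode (pair_fst p, list_tl_code (pair_snd p)))))))"
proof (cases p rule: eval_fuel_code_cases)
  case (1 t xs)
  show ?thesis
  proof (cases xs)
    case (Cons n ys)
    let ?G = "\<lambda>i y. eval_fuel g t (i # y # ys)"
    have "((\<lambda>a. prim_rec_step g p a) ^^ k)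
          (prod_encode (0, eval_fuel_code f (prod_encode (t, list_encode ys))))
        = prod_encode (k, encode_option (iterate_option (eval_fuel f t ys) ?G k))"
      for k
    proof (induction k)
      case (Suc k)
      then show ?case
        unfolding 1 by (cases "iterate_option (eval_fuel f t ys) ?G k")
          (simp_all add: prim_rec_step_def eval_fuel_code_encode[symmetric] Cons)
    qed (simp add: eval_fuel_code_encode)
    then show ?thesis
      using eval_fuel_code_encode[of "PrimRec f g" t "n # ys"] unfolding 1 Cons
      by (simp add: eval_fuel_code_encode)
  qed (use eval_fuel_code_encode[of "PrimRec f g" t "[]"] in \<open>simp add: 1\<close>)
qed

text \<open>The state of the search for a zero of f is coded as (m, flag): flag 0 means that the values at
  0, ..., m - 1 were positive; flag 1 that f is zero at m, and flag 2 that f is undefined at m.\<close>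
definition min_search_step :: "recf \<Rightarrow> nat \<Rightarrow> nat \<Rightarrow> nat" where
  "min_search_step f p a =
     (if pair_snd a \<noteq> 0 then a
      else if eval_fuel_code f (prod_encode (pair_fst p, Suc (prod_encode (pair_fst a,
          pair_snd p)))) = 1
      then prod_encode (pair_fst a, 1)
      else if eval_fuel_code f (prod_encode (pair_fst p, Suc (prod_encode (pair_fst a,
          pair_snd p)))) = 0
      then prod_encode (pair_fst a, 2)
      else prod_encode (Suc (pair_fst a), 0))"

definition min_search_result :: "nat \<Rightarrow> nat" where
  "min_search_result a = (if pair_snd a = 1 then Suc (pair_fst a) else 0)"

lemma funpow_min_search_step_stop:
  "pair_snd a \<noteq> 0 \<Longrightarrow> ((\<lambda>a. min_search_step f p a) ^^ k) a = a"
  by (induction k) (auto simp: min_search_step_def)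

lemma eval_fuel_code_Minimise:
  "eval_fuel_code (Minimise f) p =
     min_search_result (((\<lambda>a. min_search_step f p a) ^^ pair_fst p) (prod_encode (0, 0)))"
proof (cases p rule: eval_fuel_code_cases)
  case (1 t xs)
  have "min_search_result (((\<lambda>a. min_search_step f p a) ^^ k) (prod_encode (m, 0))) =
      encode_option (min_search (\<lambda>m. eval_fuel f t (m # xs)) m k)" for k m
  proof (induction k arbitrary: m)
    case 0 then show ?case by (simp add: min_search_result_def)
  next
    case (Suc k)
    have step: "((\<lambda>a. min_search_step f p a) ^^ Suc k) a =
        ((\<lambda>a. min_search_step f p a) ^^ k) (min_search_step f p a)" for a
      by (simp only: funpow_Suc_right o_apply)
    have eval: "eval_fuel_code f (prod_encode (pair_fst p, Suc (prod_encode (m, pair_snd p)))) =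
        encode_option (eval_fuel f t (m # xs))"
      unfolding 1 using eval_fuel_code_encode[of f t "m # xs"] by simp
    show ?case
    proof (cases "eval_fuel f t (m # xs)")
      case None
      then have "min_search_step f p (prod_encode (m, 0)) = prod_encode (m, 2)"
        using eval by (simp add: min_search_step_def)
      then show ?thesis using None funpow_min_search_step_stop[of "prod_encode (m, 2)"]
        by (simp add: step min_search_result_def del: funpow.simps)
    next
      case (Some v)
      show ?thesis
      proof (cases v)
        case 0
        then have "min_search_step f p (prod_encode (m, 0)) = prod_encode (m, 1)"
          using eval Some by (simp add: min_search_step_def)
        then show ?thesis using Some 0 funpow_min_search_step_stop[of "prod_encode (m, 1)"]
          by (simp add: step min_search_result_def del: funpow.simps)
      next
        case (Suc w)
        then have "min_search_step f p (prod_encode (m, 0)) = prod_encode (Suc m, 0)"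
          using eval Some by (simp add: min_search_step_def)
        then show ?thesis using Some Suc Suc.IH by (simp add: step del: funpow.simps)
      qed
    qed
  qed
  from this[of t 0] show ?thesis unfolding 1 by (simp add: eval_fuel_code_encode)
qed

lemma computable_eval_fuel_code: "computable (eval_fuel_code c)"
proof (induction c)
  case Zero
  have "eval_fuel_code Zero = (\<lambda>p. 1)" by (auto simp: eval_fuel_code_def)
  then show ?case by (simp add: computable_const)
next
  case Succ
  show ?case unfolding eval_fuel_code_Succ[abs_def]
    by (intro computable_if decidable_eq computable_pair_snd computable_id computable_const
        computable_Suc computable_list_hd_code)
next
  case (Proj i)
  show ?case unfolding eval_fuel_code_Proj[abs_def]
    by (intro computable_if decidable_eq computable_pair_snd computable_id computable_const
        computable_Suc computable_list_hd_code computable_funpow_list_tl_code)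
next
  case (Comp f gs)
  have args: "computable (eval_args_code gs)"
    using Comp.IH(2) by (intro computable_eval_args_code) auto
  show ?case unfolding eval_fuel_code_Comp[abs_def]
    by (intro computable_if decidable_eq computable_const computable_compose[OF Comp.IH(1)]
        computable_compose[OF args] computable_prod_encode computable_pair_fst computable_diff
        computable_id)
next
  case (PrimRec f g)
  show ?case unfolding eval_fuel_code_PrimRec[abs_def] prim_rec_step_def
    by (intro computable_if decidable_eq computable_pair_snd computable_pair_fst computable_const
        computable_id computable_funpow computable_prod_encode computable_Suc
        computable_list_hd_code computable_list_tl_code computable_diff
        computable_compose[OF PrimRec.IH(1)] computable_compose[OF PrimRec.IH(2)])
next
  case (Minimise f)
  show ?case unfolding eval_fuel_code_Minimise[abs_def] min_search_step_def min_search_result_def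
    by (intro computable_if decidable_eq decidable_not computable_pair_snd computable_pair_fst
        computable_const computable_id computable_funpow computable_prod_encode computable_Suc
        computable_compose[OF Minimise.IH])
qed

section \<open>Binary strings and their codes\<close>

lemma str_enc_bounds: "2 ^ length s \<le> str_enc s + 1 \<and> str_enc s + 1 < 2 ^ Suc (length s)"
  by (induction s) auto

lemma inj_str_enc: "inj str_enc"
proof (rule injI)
  fix x y show "str_enc x = str_enc y \<Longrightarrow> x = y"
  proof (induction x arbitrary: y)
    case Nil then show ?case by (cases y) (auto split: if_splits)
  next
    case (Cons a x)
    then show ?case by (cases y) (auto split: if_splits, presburger+)
  qed
qed

lemma surj_str_enc: "surj str_enc"
proof -
  have "\<exists>s. str_enc s = n" for n
  proof (induction n rule: less_induct)
    case (less n)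
    show ?case
    proof (cases n)
      case 0 then show ?thesis by (intro exI[of _ "[]"]) simp
    next
      case (Suc m)
      obtain s where s: "str_enc s = m div 2" using less Suc
        by (metis div_le_dividend le_imp_less_Suc)
      show ?thesis
      proof (cases "even m")
        case True then show ?thesis using s Suc by (intro exI[of _ "False # s"]) auto
      next
        case False then have "str_enc (True # s) = n" using s Suc by simp
        then show ?thesis by blast
      qed
    qed
  qed
  then show ?thesis by (metis surjI)
qed

lemma inv_str_enc_str_enc [simp]: "inv str_enc (str_enc s) = s"
  by (simp add: inj_str_enc)

lemma str_enc_inv_str_enc [simp]: "str_enc (inv str_enc n) = n"
  by (simp add: surj_str_enc surj_f_inv_f)

lemma str_enc_eq_iff [simp]: "str_enc x = str_enc y \<longleftrightarrow> x = y"
  using inj_str_enc by (simp add: inj_eq)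

lemma length_eq_if_str_enc_between:
  assumes "2 ^ L \<le> str_enc s + 1" "str_enc s + 1 < 2 ^ Suc L"
  shows "length s = L"
proof -
  have b: "2 ^ length s \<le> str_enc s + 1" "str_enc s + 1 < 2 ^ Suc (length s)"
    using str_enc_bounds by auto
  have "L < Suc (length s)"
    using assms(1) b(2) by (metis le_less_trans nat_power_less_imp_less zero_less_numeral)
  moreover have "length s < Suc L"
    using b(1) assms(2) by (metis le_less_trans nat_power_less_imp_less zero_less_numeral)
  ultimately show ?thesis by simp
qed

lemma length_inv_str_enc: "2 ^ L \<le> c + 1 \<Longrightarrow> c + 1 < 2 ^ Suc L \<Longrightarrow> length (inv str_enc c) = L"
  using length_eq_if_str_enc_between[of L "inv str_enc c"] by simp

lemma length_less_if_str_enc_less: "str_enc p < 2 ^ L - 1 \<Longrightarrow> length p < L"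
proof -
  assume "str_enc p < 2 ^ L - 1"
  moreover have "2 ^ length p \<le> str_enc p + 1" using str_enc_bounds by auto
  ultimately have "(2::nat) ^ length p < 2 ^ L" by linarith
  then show ?thesis by simp
qed

definition length_code :: "nat \<Rightarrow> nat" where
  "length_code c = bounded_min (Suc c) (\<lambda>L. c + 1 < 2 ^ Suc L)"

lemma length_code_str_enc [simp]: "length_code (str_enc s) = length s"
proof -
  let ?c = "str_enc s"
  have "\<exists>i<Suc ?c. ?c + 1 < 2 ^ Suc i"
  proof (intro exI conjI)
    show "?c + 1 < 2 ^ Suc (length s)" using str_enc_bounds by auto
    have "length s < 2 ^ length s" by simp
    then show "length s < Suc ?c" using str_enc_bounds[of s] by linarith
  qed
  from bounded_min_correct[OF this]
  have h: "?c + 1 < 2 ^ Suc (length_code ?c)" "\<forall>j<length_code ?c. \<not> ?c + 1 < 2 ^ Suc j"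
    unfolding length_code_def by auto
  have "2 ^ length_code ?c \<le> ?c + 1"
    using h(2) by (cases "length_code ?c") (auto simp: not_less)
  then show ?thesis using length_eq_if_str_enc_between h(1) by metis
qed

lemma computable_length_code: "computable f \<Longrightarrow> computable (\<lambda>x. length_code (f x))"
proof -
  have "computable length_code"
    unfolding length_code_def[abs_def]
    by (intro computable_bounded_min decidable_less computable_add computable_power computable_Suc
        computable_pair_fst computable_pair_snd computable_id computable_const)
  then show "computable f \<Longrightarrow> computable (\<lambda>x. length_code (f x))" by (rule computable_compose)
qed

definition bin_value :: "nat \<Rightarrow> bool list \<Rightarrow> nat" where
  "bin_value acc xs = foldl (\<lambda>acc b. 2 * acc + (if b then 1 else 0)) acc xs"

lemma bin_value_snoc: "bin_value acc (xs @ [b]) = 2 * bin_value acc xs + (if b then 1 else 0)"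
  by (simp add: bin_value_def)

definition value_step :: "nat \<Rightarrow> nat" where
  "value_step a = (if pair_fst a = 0 then a else
     prod_encode ((pair_fst a - 1) div 2,
                  2 * pair_snd a + (pair_fst a - 1) mod 2))"

definition value_code :: "nat \<Rightarrow> nat" where
  "value_code c = pair_snd ((value_step ^^ c) (prod_encode (c, 0)))"

lemma funpow_value_step:
  "length xs \<le> k \<Longrightarrow>
    (value_step ^^ k) (prod_encode (str_enc xs, acc)) = prod_encode (0, bin_value acc xs)"
proof (induction xs arbitrary: acc k)
  case Nil
  have "(value_step ^^ k) (prod_encode (0, acc)) = prod_encode (0, acc)" for k
    by (induction k) (auto simp: value_step_def)
  then show ?case by (simp add: bin_value_def)
next
  case (Cons b xs)
  then obtain k' where k: "k = Suc k'" "length xs \<le> k'" by (cases k) auto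
  have "value_step (prod_encode (str_enc (b # xs), acc)) =
      prod_encode (str_enc xs, 2 * acc + (if b then 1 else 0))"
    by (auto simp: value_step_def)
  then show ?case
    using Cons.IH[OF k(2)] unfolding k funpow_Suc_right o_apply by (simp add: bin_value_def)
qed

lemma value_code_str_enc: "value_code (str_enc xs) = bin_value 0 xs"
proof -
  have "length xs \<le> str_enc xs"
    using str_enc_bounds[of xs] by (metis Suc_eq_plus1 Suc_le_eq le_trans less_exp not_less_eq_eq)
  then show ?thesis unfolding value_code_def using funpow_value_step by simp
qed

lemma computable_value_code: "computable f \<Longrightarrow> computable (\<lambda>x. value_code (f x))"
proof -
  have "computable value_code"
    unfolding value_code_def[abs_def] value_step_def
    by (intro computable_pair_snd computable_funpow computable_if decidable_eq computable_pair_fst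
        computable_prod_encode computable_div computable_mod computable_add computable_mult
        computable_diff computable_id computable_const)
  then show "computable f \<Longrightarrow> computable (\<lambda>x. value_code (f x))" by (rule computable_compose)
qed

lemma floor_double_bounds: "2 * \<lfloor>y\<rfloor> \<le> \<lfloor>2 * y\<rfloor> \<and> \<lfloor>2 * y\<rfloor> \<le> 2 * \<lfloor>y\<rfloor> + 1" for y :: real
proof -
  have y: "of_int \<lfloor>y\<rfloor> \<le> y" "y < of_int \<lfloor>y\<rfloor> + 1" by linarith+
  then have "2 * \<lfloor>y\<rfloor> \<le> \<lfloor>2 * y\<rfloor>" by (simp add: le_floor_iff)
  moreover have "2 * y < of_int (2 * \<lfloor>y\<rfloor> + 2)" using y by linarith
  then have "\<lfloor>2 * y\<rfloor> < 2 * \<lfloor>y\<rfloor> + 2" by (simp add: floor_less_iff)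
  ultimately show ?thesis by simp
qed

lemma length_real_prefix [simp]: "length (real_prefix x n) = n"
  by (simp add: real_prefix_def)

lemma bin_value_real_prefix:
  assumes "0 \<le> x" "x < 1"
  shows "int (bin_value 0 (real_prefix x n)) = \<lfloor>x * 2 ^ n\<rfloor>"
proof (induction n)
  case 0
  then show ?case using assms by (simp add: real_prefix_def bin_value_def floor_eq_iff)
next
  case (Suc n)
  have "frac x = x" using assms by (simp add: frac_eq)
  then have prefix: "real_prefix x (Suc n) = real_prefix x n @ [odd \<lfloor>x * 2 ^ Suc n\<rfloor>]"
    unfolding real_prefix_def by simp
  have "2 * \<lfloor>x * 2 ^ n\<rfloor> \<le> \<lfloor>x * 2 ^ Suc n\<rfloor> \<and> \<lfloor>x * 2 ^ Suc n\<rfloor> \<le> 2 * \<lfloor>x * 2 ^ n\<rfloor> + 1"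
    using floor_double_bounds[of "x * 2 ^ n"] by (simp add: algebra_simps)
  then have "\<lfloor>x * 2 ^ Suc n\<rfloor> = 2 * \<lfloor>x * 2 ^ n\<rfloor> + (if odd \<lfloor>x * 2 ^ Suc n\<rfloor> then 1 else 0)"
    by (cases "odd \<lfloor>x * 2 ^ Suc n\<rfloor>") presburger+
  then show ?case unfolding prefix bin_value_snoc using Suc by (cases "odd \<lfloor>x * 2 ^ Suc n\<rfloor>") auto
qed

section \<open>Partial recursive functions and machines\<close>

lemma partial_recursive_least_search:
  assumes P: "decidable (\<lambda>p. P (pair_fst p) (pair_snd p))"
    and Out: "computable (\<lambda>p. Out (pair_fst p) (pair_snd p))"
  shows "partial_recursive (\<lambda>x. if \<exists>w. P x w then Some (Out x (LEAST w. P x w)) else None)"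
proof -
  have "decidable (\<lambda>p. P (pair_snd p) (pair_fst p))"
    by (rule decidable_apply_uncurried[OF P]) (intro computable_pair_snd computable_pair_fst computable_id)+
  then have "computable (\<lambda>p. if P (pair_snd p) (pair_fst p) then 0 else 1)"
    by (intro computable_if computable_const)
  then obtain cP where cP: "\<And>w x. reval cP [w, x] (if P x w then 0 else 1)"
    using computable2_if_computable_uncurried[of "\<lambda>w x. if P x w then 0 else 1"]
    unfolding computable2_def by auto
  obtain cO where cO: "\<And>a b. reval cO [a, b] (Out a b)"
    using computable2_if_computable_uncurried[OF Out] unfolding computable2_def by blast
  let ?c = "Comp cO [Proj 0, Minimise cP]"
  have cP_iff: "reval cP [m, x] y \<longleftrightarrow> y = (if P x m then 0 else 1)" for m x y
  proof
    assume "reval cP [m, x] y"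
    then show "y = (if P x m then 0 else 1)" by (rule reval_deterministic[OF cP])
  qed (simp add: cP)
  have search: "reval (Minimise cP) [x] n \<longleftrightarrow> P x n \<and> (\<forall>m<n. \<not> P x m)" for x n
  proof
    assume "reval (Minimise cP) [x] n"
    then show "P x n \<and> (\<forall>m<n. \<not> P x m)"
      by (auto elim!: reval_MinimiseE simp: cP_iff split: if_splits)
  next
    assume "P x n \<and> (\<forall>m<n. \<not> P x m)"
    then show "reval (Minimise cP) [x] n" by (intro reval_mn) (auto simp: cP_iff)
  qed
  have "reval ?c [x] z \<longleftrightarrow> (\<exists>w. P x w) \<and> z = Out x (LEAST w. P x w)" for x z
  proof
    assume "reval ?c [x] z"
    then obtain ys where "length ys = length [Proj 0, Minimise cP]"
        "\<forall>i<length [Proj 0, Minimise cP]. reval ([Proj 0, Minimise cP] ! i) [x] (ys ! i)"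
        "reval cO ys z"
      by (rule reval_CompE)
    then have ys: "length ys = 2" "reval (Proj 0) [x] (ys ! 0)"
        "reval (Minimise cP) [x] (ys ! 1)" "reval cO ys z"
      by auto
    have y1: "P x (ys ! 1)" "\<forall>m<ys ! 1. \<not> P x m" using search ys(3) by auto
    then have least: "(LEAST w. P x w) = ys ! 1" by (metis Least_equality not_less)
    have "ys = [x, ys ! 1]"
      using ys(1,2) reval_deterministic[OF reval_proj0] by (cases ys; cases "tl ys") fastforce+
    then have "z = Out x (ys ! 1)" using reval_deterministic[OF cO] ys(4) by metis
    then show "(\<exists>w. P x w) \<and> z = Out x (LEAST w. P x w)" using y1 least by auto
  next
    assume "(\<exists>w. P x w) \<and> z = Out x (LEAST w. P x w)"
    moreover from this have "reval (Minimise cP) [x] (LEAST w. P x w)"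
      unfolding search by (auto intro: LeastI dest: not_less_Least)
    ultimately show "reval ?c [x] z"
      using cO by (intro reval_comp2I[OF reval_proj0]) auto
  qed
  then show ?thesis unfolding partial_recursive_def by (intro exI[of _ ?c]) auto
qed

lemma partial_recursive_bind:
  assumes "partial_recursive \<phi>" "partial_recursive \<psi>"
  shows "partial_recursive (\<lambda>x. Option.bind (\<phi> x) \<psi>)"
proof -
  obtain c1 c2 where c1: "\<And>x y. \<phi> x = Some y \<longleftrightarrow> reval c1 [x] y"
    and c2: "\<And>x y. \<psi> x = Some y \<longleftrightarrow> reval c2 [x] y"
    using assms unfolding partial_recursive_def by blast
  have "Option.bind (\<phi> x) \<psi> = Some z \<longleftrightarrow> reval (Comp c2 [c1]) [x] z" for x z
  proof
    assume "Option.bind (\<phi> x) \<psi> = Some z"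
    then obtain y where "\<phi> x = Some y" "\<psi> y = Some z" by (cases "\<phi> x") auto
    then show "reval (Comp c2 [c1]) [x] z" using c1 c2 by (intro reval_comp1I) auto
  next
    assume "reval (Comp c2 [c1]) [x] z"
    then obtain ys where "length ys = 1" "reval c1 [x] (ys ! 0)" "reval c2 ys z"
      by (auto elim!: reval_CompE)
    moreover from this have "ys = [ys ! 0]" by (cases ys) auto
    ultimately show "Option.bind (\<phi> x) \<psi> = Some z" using c1 c2 by (metis bind.simps(2))
  qed
  then show ?thesis unfolding partial_recursive_def by blast
qed

lemma partial_recursive_str_of_codes:
  "partial_recursive \<phi> \<Longrightarrow> partial_recursive_str (\<lambda>p. map_option (inv str_enc) (\<phi> (str_enc p)))"
  unfolding partial_recursive_str_def by (simp add: option.map_comp comp_def option.map_ident)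

lemma prefix_free_machine_bind:
  assumes U: "prefix_free_machine U" and \<phi>: "partial_recursive \<phi>"
  shows "prefix_free_machine (\<lambda>p. Option.bind (U p) (\<lambda>s. map_option (inv str_enc) (\<phi> (str_enc s))))"
    (is "prefix_free_machine ?C")
proof -
  have "(\<lambda>x. map_option str_enc (?C (inv str_enc x))) =
      (\<lambda>x. Option.bind (map_option str_enc (U (inv str_enc x))) \<phi>)"
  proof
    fix x
    show "map_option str_enc (?C (inv str_enc x)) =
        Option.bind (map_option str_enc (U (inv str_enc x))) \<phi>"
      by (cases "U (inv str_enc x)") (auto simp: option.map_comp comp_def option.map_ident)
  qed
  moreover have "partial_recursive (\<lambda>x. map_option str_enc (U (inv str_enc x)))"
    using U unfolding prefix_free_machine_def partial_recursive_str_def by blast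
  ultimately have "partial_recursive_str ?C"
    unfolding partial_recursive_str_def using partial_recursive_bind[OF _ \<phi>] by simp
  moreover have "dom ?C \<subseteq> dom U" by (auto split: bind_splits)
  then have "prefix_free (dom ?C)"
    using U unfolding prefix_free_machine_def prefix_free_def by blast
  ultimately show ?thesis unfolding prefix_free_machine_def by blast
qed

section \<open>Program-size complexity\<close>

lemma Hc_le: "C q = Some s \<Longrightarrow> Hc C s \<le> enat (length q)"
  unfolding Hc_def by (rule INF_lower) simp

lemma Hc_attained: "Hc C s = enat k \<Longrightarrow> \<exists>q. C q = Some s \<and> length q = k"
proof -
  assume h: "Hc C s = enat k"
  have ne: "{p. C p = Some s} \<noteq> {}"
  proof
    assume "{p. C p = Some s} = {}"
    then have "Hc C s = \<infinity>" unfolding Hc_def by (simp add: top_enat_def)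
    then show False using h by simp
  qed
  have "Hc C s \<in> (\<lambda>p. enat (length p)) ` {p. C p = Some s}"
    unfolding Hc_def Inf_enat_def using ne by (auto intro: LeastI)
  then show ?thesis using h by auto
qed

lemma Hc_optimal_le:
  assumes "optimal_machine V" "prefix_free_machine C"
  shows "\<exists>d. \<forall>p s. C p = Some s \<longrightarrow> Hc V s \<le> enat (length p + d)"
proof -
  obtain d where d: "\<forall>p\<in>dom C. \<exists>q\<in>dom V. V q = C p \<and> length q \<le> length p + d"
    using assms unfolding optimal_machine_def by blast
  have "Hc V s \<le> enat (length p + d)" if Cp: "C p = Some s" for p s
  proof -
    have "p \<in> dom C" using Cp by blast
    then obtain q where "V q = C p" "length q \<le> length p + d" using d by blast
    then show ?thesis using Hc_le[of V q s] Cp order_trans by fastforce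
  qed
  then show ?thesis by blast
qed

text \<open>On the code 3 * 2 ^ k - 1 of the string 0...01 with k zeros, this outputs the code
  4 ^ k - 1 of the string of 2 * k zeros.\<close>
definition zeros_doubler_on_codes :: "nat \<Rightarrow> nat option" where
  "zeros_doubler_on_codes x =
     (if \<exists>w. x + 1 = 3 * 2 ^ w then Some (4 ^ (LEAST w. x + 1 = 3 * 2 ^ w) - 1) else None)"

definition zeros_doubler :: "bool list \<Rightarrow> bool list option" where
  "zeros_doubler p = map_option (inv str_enc) (zeros_doubler_on_codes (str_enc p))"

lemma str_enc_replicate_False: "str_enc (replicate m False) + 1 = 2 ^ m"
  by (induction m) auto

lemma str_enc_replicate_False_True: "str_enc (replicate k False @ [True]) + 1 = 3 * 2 ^ k"
  by (induction k) auto

lemma zeros_doubler_replicate: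
  "zeros_doubler (replicate k False @ [True]) = Some (replicate (2 * k) False)"
proof -
  let ?x = "str_enc (replicate k False @ [True])"
  have w: "?x + 1 = 3 * 2 ^ w \<longleftrightarrow> w = k" for w
    using str_enc_replicate_False_True[of k] by auto
  have least: "(LEAST w. ?x + 1 = 3 * 2 ^ w) = k" unfolding w by (rule Least_equality) auto
  have "4 ^ k - 1 = str_enc (replicate (2 * k) False)"
    using str_enc_replicate_False[of "2 * k"] by (simp add: power_mult)
  then show ?thesis unfolding zeros_doubler_def zeros_doubler_on_codes_def least using w by auto
qed

lemma zeros_doubler_dom: "zeros_doubler p \<noteq> None \<Longrightarrow> \<exists>k. p = replicate k False @ [True]"
proof -
  assume "zeros_doubler p \<noteq> None"
  then obtain w where "str_enc p + 1 = 3 * 2 ^ w"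
    unfolding zeros_doubler_def zeros_doubler_on_codes_def by (auto split: if_splits)
  then have "str_enc p = str_enc (replicate w False @ [True])"
    using str_enc_replicate_False_True[of w] by linarith
  then show ?thesis by auto
qed

lemma prefix_free_machine_zeros_doubler: "prefix_free_machine zeros_doubler"
  unfolding prefix_free_machine_def
proof
  have "partial_recursive zeros_doubler_on_codes"
    unfolding zeros_doubler_on_codes_def[abs_def]
    by (rule partial_recursive_least_search)
      (intro decidable_eq computable_add computable_mult computable_power computable_diff
        computable_pair_fst computable_pair_snd computable_id computable_const)+
  then show "partial_recursive_str zeros_doubler"
    unfolding zeros_doubler_def[abs_def] by (rule partial_recursive_str_of_codes)
  show "prefix_free (dom zeros_doubler)" unfolding prefix_free_def
  proof (intro ballI allI impI)
    fix p q assume "p \<in> dom zeros_doubler" "p @ q \<in> dom zeros_doubler"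
    then obtain k j where "p = replicate k False @ [True]" "p @ q = replicate j False @ [True]"
      using zeros_doubler_dom by blast
    then have "replicate k False @ True # q = replicate j False @ [True]" by simp
    then show "q = []"
    proof (induction k arbitrary: j)
      case 0 then show ?case by (cases j) auto
    next
      case (Suc k) then show ?case by (cases j) auto
    qed
  qed
qed

lemma compressible_string_exists: "optimal_machine V \<Longrightarrow> \<exists>s. Hc V s < enat (length s)"
proof -
  assume "optimal_machine V"
  then obtain d where d: "\<And>p s. zeros_doubler p = Some s \<Longrightarrow> Hc V s \<le> enat (length p + d)"
    using Hc_optimal_le[OF _ prefix_free_machine_zeros_doubler] by blast
  have "Hc V (replicate (2 * (d + 2)) False) \<le> enat (length (replicate (d + 2) False @ [True]) + d)"
    by (rule d[OF zeros_doubler_replicate])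
  also have "\<dots> < enat (length (replicate (2 * (d + 2)) False))" by simp
  finally show ?thesis by blast
qed

section \<open>The series \<Theta>\<close>

definition weight :: "real \<Rightarrow> bool list \<Rightarrow> real" where
  "weight T s = 2 powr (- real (length s) / T)"

lemma weight_pos: "0 < weight T s" by (simp add: weight_def)

lemma finite_bool_lists_length_eq: "finite {s :: bool list. length s = l}"
  using finite_lists_length_eq[of "UNIV :: bool set" l] by simp

lemma card_bool_lists_length_eq: "card {s :: bool list. length s = l} = 2 ^ l"
  using card_lists_length_eq[of "UNIV :: bool set" l] by simp

lemma finite_bool_lists_length_less: "finite {s :: bool list. length s < m}"
proof -
  have "{s :: bool list. length s < m} = (\<Union>l<m. {s. length s = l})" by auto
  then show ?thesis using finite_bool_lists_length_eq by simp
qed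

lemma sum_bool_lists_length_less: "(\<Sum>s\<in>{s :: bool list. length s < m}. h (length s))
    = (\<Sum>l<m. 2 ^ l * (h l :: real))"
proof (induction m)
  case 0 then show ?case by simp
next
  case (Suc m)
  have "{s :: bool list. length s < Suc m} = {s :: bool list. length s < m}
      \<union> {s :: bool list. length s = m}" by auto
  then have "(\<Sum>s\<in>{s :: bool list. length s < Suc m}. h (length s)) =
     (\<Sum>s\<in>{s :: bool list. length s < m}. h (length s)) +
     (\<Sum>s\<in>{s :: bool list. length s = m}. h (length s))"
    using finite_bool_lists_length_less finite_bool_lists_length_eq
    by (simp add: sum.union_disjoint disjoint_iff)
  also have "(\<Sum>s\<in>{s :: bool list. length s = m}. h (length s)) = 2 ^ m * h m"
    using card_bool_lists_length_eq[of m] by simp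
  finally show ?case using Suc by simp
qed

lemma sum_length_le_suminf:
  fixes F :: "bool list set"
  assumes F: "finite F" and h: "\<And>l. 0 \<le> h l" and sm: "summable (\<lambda>l. 2 ^ l * (h l :: real))"
  shows "(\<Sum>s\<in>F. h (length s)) \<le> (\<Sum>l. 2 ^ l * h l)"
proof -
  obtain m where m: "\<forall>s\<in>F. length s < m"
    using F by (metis finite_nat_set_iff_bounded finite_imageI imageI)
  have "(\<Sum>s\<in>F. h (length s)) \<le> (\<Sum>s\<in>{s :: bool list. length s < m}. h (length s))"
    by (rule sum_mono2[OF finite_bool_lists_length_less]) (use m h in auto)
  also have "\<dots> = (\<Sum>l<m. 2 ^ l * h l)" by (rule sum_bool_lists_length_less)
  also have "\<dots> \<le> (\<Sum>l. 2 ^ l * h l)" using sm h by (intro sum_le_suminf) auto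
  finally show ?thesis .
qed

lemma count_times_weight_eq_power: "2 ^ l * 2 powr (- real l / T) = (2 powr (1 - 1 / T)) ^ l"
proof -
  have "(2 powr (1 - 1 / T)) ^ l = 2 powr (real l * (1 - 1 / T))"
    by (simp add: powr_realpow[symmetric] powr_powr mult.commute)
  also have "\<dots> = 2 powr (real l) * 2 powr (- real l / T)"
    by (simp add: powr_add[symmetric] algebra_simps)
  finally show ?thesis by (simp add: powr_realpow)
qed

lemma powr_one_minus_inverse_less_1: "0 < (T::real) \<Longrightarrow> T < 1 \<Longrightarrow> 2 powr (1 - 1 / T) < 1"
proof -
  assume T: "0 < T" "T < 1"
  then have "1 < 1 / T" by (simp add: less_divide_eq_1_pos)
  then have "1 - 1 / T < 0" by simp
  then show ?thesis by (simp add: powr_less_one)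
qed

lemma summable_count_times_weight: "0 < T \<Longrightarrow> T < 1 \<Longrightarrow> summable (\<lambda>l. 2 ^ l * 2 powr (- real l / T))"
  unfolding count_times_weight_eq_power using powr_one_minus_inverse_less_1
  by (intro summable_geometric) auto

lemma summable_count_times_length_weight: "0 < T \<Longrightarrow> T < 1 \<Longrightarrow>
    summable (\<lambda>l. 2 ^ l * (real l * 2 powr (- real l / T)))"
proof -
  assume T: "0 < T" "T < 1"
  define r where "r = 2 powr (1 - 1 / T)"
  have r: "0 < r" "r < 1" using powr_one_minus_inverse_less_1[OF T] by (auto simp: r_def)
  have sr: "norm (sqrt r) < 1" "0 < sqrt r" using r by auto
  have "(\<lambda>n. of_nat n * (sqrt r) ^ n) \<longlonglongrightarrow> 0" by (rule powser_times_n_limit_0[OF sr(1)])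
  then have "Bseq (\<lambda>n. real n * (sqrt r) ^ n)"
    by (intro convergent_imp_Bseq) (auto simp: convergent_def)
  then obtain B where B: "\<And>n. norm (real n * (sqrt r) ^ n) \<le> B" by (meson BseqE)
  have eq: "2 ^ l * (real l * 2 powr (- real l / T)) = (real l * (sqrt r) ^ l) * (sqrt r) ^ l" for l
  proof -
    have "(sqrt r) ^ l * (sqrt r) ^ l = r ^ l" using r by (simp add: power_mult_distrib[symmetric])
    then show ?thesis using count_times_weight_eq_power[of l T] unfolding r_def[symmetric]
      by (simp add: algebra_simps)
  qed
  have "summable (\<lambda>l. B * (sqrt r) ^ l)" using sr by (intro summable_mult summable_geometric) simp
  moreover have "norm (2 ^ l * (real l * 2 powr (- real l / T))) \<le> B * (sqrt r) ^ l" for l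
    unfolding eq using B[of l] sr by (simp add: abs_mult mult_right_mono)
  ultimately show ?thesis by (rule summable_comparison_test'[where N=0])
qed

lemma bounded_length_weighted_sums:
  assumes "0 < T'" "T' < 1"
  shows "\<exists>K. \<forall>F. finite F \<longrightarrow> (\<Sum>s\<in>F. real (length s) * weight T' s) \<le> K"
proof (intro exI allI impI)
  fix F :: "bool list set" assume "finite F"
  then show "(\<Sum>s\<in>F. real (length s) * weight T' s)
      \<le> (\<Sum>l. 2 ^ l * (real l * 2 powr (- real l / T')))"
    unfolding weight_def using summable_count_times_length_weight[OF assms]
    by (intro sum_length_le_suminf[where h = "\<lambda>l. real l * 2 powr (- real l / T')"]) auto
qed

lemma one_minus_powr_neg_le: "0 \<le> (y::real) \<Longrightarrow> 1 - 2 powr (- y) \<le> y * ln 2"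
proof -
  have "1 + (- y * ln 2) \<le> exp (- y * ln 2)" by (rule exp_ge_add_one_self)
  then show ?thesis by (simp add: powr_def)
qed

lemma weight_diff_le:
  assumes T: "0 < T" "T \<le> u" "u \<le> T'"
  shows "weight u s - weight T s \<le> (u - T) * ln 2 / T\<^sup>2 * (real (length s) * weight T' s)"
proof -
  define l where "l = real (length s)"
  have l: "0 \<le> l" by (simp add: l_def)
  define y where "y = l / T - l / u"
  have u0: "0 < u" using T by simp
  have y_eq: "y = l * (u - T) / (T * u)" unfolding y_def using T u0 by (simp add: field_simps)
  have y0: "0 \<le> y" unfolding y_eq using T l u0 by simp
  have yb: "y \<le> l * (u - T) / T\<^sup>2"
    unfolding y_eq power2_eq_square using T l u0
    by (intro divide_left_mono mult_left_mono mult_nonneg_nonneg) auto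
  have split: "weight T s = 2 powr (- l / u) * 2 powr (- y)"
    unfolding weight_def l_def[symmetric] y_def by (simp add: powr_add[symmetric])
  have "weight u s - weight T s = 2 powr (- l / u) * (1 - 2 powr (- y))"
    unfolding split by (simp add: weight_def l_def algebra_simps)
  also have "\<dots> \<le> 2 powr (- l / T') * (y * ln 2)"
  proof (rule mult_mono)
    have "l / T' \<le> l / u" using T l u0 by (intro divide_left_mono) auto
    then show "2 powr (- l / u) \<le> 2 powr (- l / T')" by simp
    show "1 - 2 powr (- y) \<le> y * ln 2" by (rule one_minus_powr_neg_le[OF y0])
    show "0 \<le> 1 - 2 powr (- y)" using y0 powr_mono[of "-y" 0 2] by simp
  qed (use y0 in auto)
  also have "\<dots> \<le> 2 powr (- l / T') * (l * (u - T) / T\<^sup>2 * ln 2)"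
    using yb by (intro mult_left_mono mult_right_mono) auto
  also have "\<dots> = (u - T) * ln 2 / T\<^sup>2 * (real (length s) * weight T' s)"
    by (simp add: weight_def l_def)
  finally show ?thesis .
qed

lemma weight_summable_on:
  assumes "0 < T" "T < 1"
  shows "weight T summable_on A"
proof (rule nonneg_bdd_above_summable_on)
  show "\<And>x. x \<in> A \<Longrightarrow> 0 \<le> weight T x" using weight_pos less_imp_le by blast
  show "bdd_above (sum (weight T) ` {F. F \<subseteq> A \<and> finite F})"
  proof (rule bdd_aboveI2)
    fix F assume "F \<in> {F. F \<subseteq> A \<and> finite F}"
    then show "sum (weight T) F \<le> (\<Sum>l. 2 ^ l * 2 powr (- real l / T))"
      unfolding weight_def using summable_count_times_weight[OF assms]
      by (intro sum_length_le_suminf[where h = "\<lambda>l. 2 powr (- real l / T)"]) auto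
  qed
qed

lemma weight_mono: "0 < T \<Longrightarrow> T \<le> u \<Longrightarrow> weight T s \<le> weight u s"
  unfolding weight_def by (auto intro!: divide_left_mono)

lemma weight_strict_mono: "0 < T \<Longrightarrow> T < u \<Longrightarrow> s \<noteq> [] \<Longrightarrow> weight T s < weight u s"
  unfolding weight_def by (auto intro!: divide_strict_left_mono)

lemma infsum_weight_gap:
  assumes T: "0 < T" "T < u" "u < 1" and s0: "s0 \<in> A" "s0 \<noteq> []"
  shows "infsum (weight T) A + (weight u s0 - weight T s0) \<le> infsum (weight u) A"
proof -
  have sT: "weight T summable_on A" and su: "weight u summable_on A" using weight_summable_on T
    by auto
  have sm: "(\<lambda>s. - weight T s) summable_on A" using sT summable_on_uminus by blast
  have sh: "(\<lambda>s. weight u s + - weight T s) summable_on A" by (rule summable_on_add[OF su sm])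
  have "infsum (\<lambda>s. weight T s + (weight u s + - weight T s)) A = infsum (weight T) A
      + infsum (\<lambda>s. weight u s + - weight T s) A"
    by (rule infsum_add[OF sT sh])
  moreover have "(\<lambda>s. weight T s + (weight u s + - weight T s)) = weight u" by auto
  moreover have "sum (\<lambda>s. weight u s + - weight T s) {s0}
      \<le> infsum (\<lambda>s. weight u s + - weight T s) A"
    using s0 T weight_mono[of T u] sh
    by (intro finite_sum_le_infsum) auto
  ultimately show ?thesis by simp
qed

lemma infsum_finite_approx:
  assumes "f summable_on A" "0 < (e::real)"
  shows "\<exists>F. finite F \<and> F \<subseteq> A \<and> infsum f A - e < sum f F"
proof -
  have "(sum f \<longlongrightarrow> infsum f A) (finite_subsets_at_top A)"
    using assms(1) has_sum_def has_sum_infsum by blast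
  then have "\<forall>\<^sub>F F in finite_subsets_at_top A. infsum f A - e < sum f F"
    using assms(2) by (intro order_tendstoD) auto
  then show ?thesis unfolding eventually_finite_subsets_at_top by auto
qed

lemma Theta_eq_infsum_weight: "Theta V T = infsum (weight T) {s. Hc V s < enat (length s)}"
  unfolding Theta_def weight_def by simp

section \<open>Enumerating the compressible strings\<close>

definition computes :: "recf \<Rightarrow> (bool list \<Rightarrow> bool list option) \<Rightarrow> bool" where
  "computes c V \<longleftrightarrow> (\<forall>x y. map_option str_enc (V (inv str_enc x)) = Some y \<longleftrightarrow> reval c [x] y)"

lemma computes_exists: "partial_recursive_str V \<Longrightarrow> \<exists>c. computes c V"
  unfolding partial_recursive_str_def partial_recursive_def computes_def by blast

definition run_code :: "recf \<Rightarrow> nat \<Rightarrow> nat \<Rightarrow> nat" where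
  "run_code c t x = eval_fuel_code c (prod_encode (t, list_encode [x]))"

lemma run_code_eq: "run_code c t x = encode_option (eval_fuel c t [x])"
  unfolding run_code_def by (rule eval_fuel_code_encode)

lemma computable_run_code:
  "computable f \<Longrightarrow> computable g \<Longrightarrow> computable (\<lambda>x. run_code c (f x) (g x))"
  unfolding run_code_def list_encode.simps
  by (intro computable_compose[OF computable_eval_fuel_code] computable_prod_encode computable_Suc
      computable_const)

lemma run_code_output:
  assumes "computes c V" "run_code c t x = Suc y"
  shows "V (inv str_enc x) = Some (inv str_enc y)"
proof -
  have "reval c [x] y"
    using assms(2) eval_fuel_sound unfolding run_code_eq by (cases "eval_fuel c t [x]") auto
  then have "map_option str_enc (V (inv str_enc x)) = Some y" using assms(1)
    unfolding computes_def by blast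
  then show ?thesis by auto
qed

lemma run_code_eventually:
  assumes "computes c V" "V p = Some s"
  shows "\<forall>\<^sub>F t in sequentially. run_code c t (str_enc p) = Suc (str_enc s)"
proof -
  have "reval c [str_enc p] (str_enc s)" using assms unfolding computes_def by force
  from eval_fuel_eventually[OF this] show ?thesis
    unfolding run_code_eq by eventually_elim simp
qed

text \<open>Stage st of an enumeration of the codes of the strings s with Hc V s < length s, for a code c
  computing V: it lists the outputs, within fuel st, of all programs shorter than s.\<close>
definition certified_compressible :: "recf \<Rightarrow> nat \<Rightarrow> nat \<Rightarrow> bool" where
  "certified_compressible c st x \<longleftrightarrow>
     length_code x \<le> st \<and> (\<exists>p < 2 ^ length_code x - 1. run_code c st p = Suc x)"

definition certified_set :: "recf \<Rightarrow> nat \<Rightarrow> bool list set" where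
  "certified_set c st = {s. certified_compressible c st (str_enc s)}"

lemma decidable_certified_compressible:
  "decidable (\<lambda>p. certified_compressible c (pair_fst p) (pair_snd p))"
  unfolding certified_compressible_def
  by (intro decidable_conj decidable_le decidable_bounded_ex decidable_eq computable_length_code
      computable_pair_fst computable_pair_snd computable_id computable_diff computable_power computable_const
      computable_Suc computable_run_code)

lemma certified_compressible_sound:
  assumes "computes c V" "certified_compressible c st (str_enc s)"
  shows "Hc V s < enat (length s)"
proof -
  obtain p where p: "p < 2 ^ length s - 1" "run_code c st p = Suc (str_enc s)"
    using assms(2) unfolding certified_compressible_def by auto
  have "V (inv str_enc p) = Some s" using run_code_output[OF assms(1) p(2)] by simp
  then have "Hc V s \<le> enat (length (inv str_enc p))" by (rule Hc_le)
  also have "length (inv str_enc p) < length s"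
    using p(1) by (intro length_less_if_str_enc_less) simp
  finally show ?thesis by simp
qed

lemma certified_compressible_eventually:
  assumes "computes c V" "Hc V s < enat (length s)"
  shows "\<forall>\<^sub>F st in sequentially. certified_compressible c st (str_enc s)"
proof -
  obtain k where k: "Hc V s = enat k" "k < length s" using assms(2) by (cases "Hc V s") auto
  obtain p where p: "V p = Some s" "length p = k" using Hc_attained[OF k(1)] by blast
  have "str_enc p + 1 < 2 ^ Suc (length p)" using str_enc_bounds by auto
  also have "(2::nat) ^ Suc (length p) \<le> 2 ^ length s"
    using p(2) k(2) by (intro power_increasing) auto
  finally have p_short: "str_enc p < 2 ^ length_code (str_enc s) - 1" by simp
  from run_code_eventually[OF assms(1) p(1)] eventually_ge_at_top[of "length s"] show ?thesis
    unfolding certified_compressible_def by eventually_elim (use p_short in auto)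
qed

lemma finite_certified_set: "finite (certified_set c st)"
proof -
  have "certified_set c st \<subseteq> {s :: bool list. length s < Suc st}"
    unfolding certified_set_def certified_compressible_def by auto
  then show ?thesis using finite_bool_lists_length_less finite_subset by blast
qed

lemma uncertified_string_exists: "\<exists>i<2 ^ L. \<not> certified_compressible c st (2 ^ L - 1 + i)"
proof (rule ccontr)
  assume all: "\<not> (\<exists>i<2 ^ L. \<not> certified_compressible c st (2 ^ L - 1 + i))"
  have "\<exists>p<2 ^ L - 1. run_code c st p = Suc (2 ^ L - 1 + i)" if i: "i < 2 ^ L" for i
  proof -
    have len: "length_code (2 ^ L - 1 + i) = L"
      using length_inv_str_enc[of L "2 ^ L - 1 + i"] i
        length_code_str_enc[of "inv str_enc (2 ^ L - 1 + i)"]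
      by simp
    have "certified_compressible c st (2 ^ L - 1 + i)" using all i by blast
    then show ?thesis unfolding certified_compressible_def len by blast
  qed
  then obtain P where P: "\<And>i. i < 2 ^ L \<Longrightarrow>
      P i < 2 ^ L - 1 \<and> run_code c st (P i) = Suc (2 ^ L - 1 + i)"
    by metis
  have "inj_on P {..<2 ^ L}"
    by (rule inj_onI) (metis P Suc_inject add_left_cancel lessThan_iff)
  moreover have "P ` {..<2 ^ L} \<subseteq> {..<2 ^ L - 1}" using P by auto
  ultimately have "card {..<(2::nat) ^ L} \<le> card {..<(2::nat) ^ L - 1}"
    by (intro card_inj_on_le) simp_all
  then have "(2::nat) ^ L \<le> 2 ^ L - 1" by (simp only: card_lessThan)
  moreover have "(0::nat) < 2 ^ L" by simp
  ultimately show False by linarith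
qed

text \<open>The number of j < 2 ^ M with j + 1 \<le> 2 ^ M * 2 powr (- L * b / a), that is the floor of the
  right-hand side, with the comparison carried out in exact integer arithmetic.\<close>
definition scaled_weight_floor :: "nat \<Rightarrow> nat \<Rightarrow> nat \<Rightarrow> nat \<Rightarrow> nat" where
  "scaled_weight_floor a b L M =
     (\<Sum>j::nat < 2 ^ M. if (j + 1) ^ a * 2 ^ (L * b) \<le> 2 ^ (M * a) then 1 else 0)"

definition certified_weight_floor :: "recf \<Rightarrow> nat \<Rightarrow> nat \<Rightarrow> nat \<Rightarrow> nat \<Rightarrow> nat" where
  "certified_weight_floor c a b st M = (\<Sum>x::nat < 2 ^ Suc st.
     if certified_compressible c st x then scaled_weight_floor a b (length_code x) M else 0)"

lemma computable_certified_weight_floor: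
  assumes "computable a" "computable b" "computable st" "computable M"
  shows "computable (\<lambda>x. certified_weight_floor c (a x) (b x) (st x) (M x))"
proof -
  have "computable (\<lambda>p. certified_weight_floor c (pair_fst (pair_fst p))
      (pair_snd (pair_fst p)) (pair_fst (pair_snd p))
      (pair_snd (pair_snd p)))"
    unfolding certified_weight_floor_def scaled_weight_floor_def
    by (intro computable_sum computable_if
        decidable_apply_uncurried[OF decidable_certified_compressible]
        computable_power computable_Suc computable_pair_fst computable_pair_snd computable_id computable_const
        decidable_le computable_mult computable_add computable_length_code)
  from computable_compose[OF this,
      of "\<lambda>x. prod_encode (prod_encode (a x, b x), prod_encode (st x, M x))"]
  show ?thesis using assms by (simp add: computable_prod_encode)
qed

lemma card_le_floor:
  "0 \<le> X \<Longrightarrow> real (\<Sum>j<m. if real (j + 1) \<le> X then 1 else (0::nat)) = min (real m) (of_int \<lfloor>X\<rfloor>)"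
proof (induction m)
  case 0 then show ?case by simp
next
  case (Suc m)
  have iff: "real (m + 1) \<le> X \<longleftrightarrow> int (m + 1) \<le> \<lfloor>X\<rfloor>" by (simp add: le_floor_iff)
  show ?case
  proof (cases "real (m + 1) \<le> X")
    case True
    then have "int m + 1 \<le> \<lfloor>X\<rfloor>" using iff by simp
    then have "min (real m) (of_int \<lfloor>X\<rfloor>) = real m" "min (real (Suc m)) (of_int \<lfloor>X\<rfloor>) = real m + 1"
      by linarith+
    then show ?thesis using Suc True by simp
  next
    case False
    then have "\<lfloor>X\<rfloor> \<le> int m" using iff by simp
    then have "min (real (Suc m)) (of_int \<lfloor>X\<rfloor>) = min (real m) (of_int \<lfloor>X\<rfloor>)" by linarith
    then show ?thesis using Suc False by simp
  qed
qed

lemma scaled_weight_floor_cond_iff: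
  assumes "0 < a"
  shows "(j + 1) ^ a * 2 ^ (L * b) \<le> (2::nat) ^ (M * a) \<longleftrightarrow>
     real (j + 1) \<le> 2 ^ M * 2 powr (- real L * real b / real a)"
proof -
  define X where "X = (2::real) ^ M * 2 powr (- real L * real b / real a)"
  have "X ^ a = 2 ^ (M * a) * (2 powr (- real L * real b / real a)) ^ a"
    unfolding X_def by (simp add: power_mult_distrib power_mult)
  also have "(2 powr (- real L * real b / real a)) ^ a = 2 powr (- real L * real b)"
    using assms by (simp add: powr_realpow[symmetric] powr_powr)
  also have "\<dots> = 1 / 2 ^ (L * b)" by (simp add: powr_minus powr_realpow[symmetric] divide_inverse)
  finally have Xa: "X ^ a = 2 ^ (M * a) / 2 ^ (L * b)" by simp
  have "(j + 1) ^ a * 2 ^ (L * b) \<le> (2::nat) ^ (M * a) \<longleftrightarrow>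
        real (j + 1) ^ a * 2 ^ (L * b) \<le> (2::real) ^ (M * a)"
    by (metis (mono_tags, lifting) of_nat_le_iff of_nat_mult of_nat_numeral of_nat_power)
  also have "\<dots> \<longleftrightarrow> real (j + 1) ^ a \<le> X ^ a" unfolding Xa by (simp add: pos_le_divide_eq)
  also have "\<dots> \<longleftrightarrow> real (j + 1) \<le> X" using assms by (intro power_mono_iff) (auto simp: X_def)
  finally show ?thesis unfolding X_def .
qed

lemma scaled_weight_floor_eq:
  assumes "0 < a" "0 < b"
  shows "real (scaled_weight_floor a b (length s) M) = of_int \<lfloor>2 ^ M * weight (real a / real b) s\<rfloor>"
proof -
  define X where "X = (2::real) ^ M * weight (real a / real b) s"
  have weight_eq: "weight (real a / real b) s = 2 powr (- real (length s) * real b / real a)"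
    unfolding weight_def using assms by (simp add: field_simps)
  have "weight (real a / real b) s \<le> 1"
    unfolding weight_eq using powr_mono[of "- real (length s) * real b / real a" 0 2]
    by (simp add: divide_nonpos_nonneg)
  then have "X \<le> 2 ^ M" unfolding X_def by simp
  then have "of_int \<lfloor>X\<rfloor> \<le> (2::real) ^ M" using of_int_floor_le[of X] by linarith
  then have "of_int \<lfloor>X\<rfloor> \<le> real (2 ^ M)" by simp
  have "scaled_weight_floor a b (length s) M = (\<Sum>j<2 ^ M. if real (j + 1) \<le> X then 1 else (0::nat))"
    unfolding scaled_weight_floor_def X_def weight_eq
    using scaled_weight_floor_cond_iff[OF assms(1)] by (intro sum.cong) auto
  also have "real \<dots> = of_int \<lfloor>X\<rfloor>"
    using card_le_floor[of X "2 ^ M"] \<open>of_int \<lfloor>X\<rfloor> \<le> real (2 ^ M)\<close>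
    by (simp add: X_def weight_def min_absorb2)
  finally show ?thesis unfolding X_def .
qed

lemma certified_weight_floor_eq:
  "real (certified_weight_floor c a b st M) =
     (\<Sum>s\<in>certified_set c st. real (scaled_weight_floor a b (length s) M))"
proof -
  have "{x\<in>{..<2 ^ Suc st}. certified_compressible c st x} = str_enc ` certified_set c st"
  proof (intro equalityI subsetI)
    fix x assume "x \<in> str_enc ` certified_set c st"
    then obtain s where s: "x = str_enc s" "certified_compressible c st (str_enc s)"
      unfolding certified_set_def by auto
    have "str_enc s + 1 < 2 ^ Suc (length s)" using str_enc_bounds by auto
    also have "(2::nat) ^ Suc (length s) \<le> 2 ^ Suc st"
      using s(2) unfolding certified_compressible_def by (intro power_increasing) auto
    finally show "x \<in> {x\<in>{..<2 ^ Suc st}. certified_compressible c st x}" using s by auto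
  qed (auto simp: certified_set_def intro!: image_eqI[where x = "inv str_enc _"])
  then have "certified_weight_floor c a b st M =
      sum (\<lambda>x. scaled_weight_floor a b (length_code x) M) (str_enc ` certified_set c st)"
    unfolding certified_weight_floor_def by (simp add: sum.inter_filter[symmetric])
  also have "\<dots> = (\<Sum>s\<in>certified_set c st. scaled_weight_floor a b (length s) M)"
    using inj_str_enc by (subst sum.reindex) (auto intro: inj_on_subset)
  finally show ?thesis by simp
qed

lemma certified_weight_floor_le:
  assumes "0 < a" "0 < b"
  shows "real (certified_weight_floor c a b st M) / 2 ^ M \<le>
     (\<Sum>s\<in>certified_set c st. weight (real a / real b) s)"
  unfolding certified_weight_floor_eq sum_divide_distrib scaled_weight_floor_eq[OF assms]
  by (intro sum_mono) (simp add: field_simps)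

lemma certified_weight_floor_ge:
  assumes "0 < a" "0 < b" "F \<subseteq> certified_set c st"
  shows "(\<Sum>s\<in>F. weight (real a / real b) s) - real (card F) / 2 ^ M \<le>
     real (certified_weight_floor c a b st M) / 2 ^ M"
proof -
  have "(\<Sum>s\<in>F. weight (real a / real b) s) - real (card F) / 2 ^ M =
      (\<Sum>s\<in>F. (2 ^ M * weight (real a / real b) s - 1) / 2 ^ M)"
    by (simp add: sum_subtractf diff_divide_distrib)
  also have "\<dots> \<le> (\<Sum>s\<in>F. real (scaled_weight_floor a b (length s) M) / 2 ^ M)"
    unfolding scaled_weight_floor_eq[OF assms(1,2)]
    by (intro sum_mono divide_right_mono) (linarith | simp)+
  also have "\<dots> \<le> (\<Sum>s\<in>certified_set c st. real (scaled_weight_floor a b (length s) M) / 2 ^ M)"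
    using assms(3) finite_certified_set by (intro sum_mono2) auto
  also have "\<dots> = real (certified_weight_floor c a b st M) / 2 ^ M"
    unfolding certified_weight_floor_eq by (simp add: sum_divide_distrib)
  finally show ?thesis .
qed

section \<open>Computing incompressible strings from the bits of T\<close>

lemma real_ratio_less_iff:
  "(real a - real b) / (real c + 1) < real S / 2 ^ M \<longleftrightarrow> a * 2 ^ M < b * 2 ^ M + (c + 1) * S"
proof -
  have "(real a - real b) / (real c + 1) < real S / 2 ^ M \<longleftrightarrow>
      real a * 2 ^ M < real b * 2 ^ M + (real c + 1) * real S"
    by (simp add: field_simps)
  also have "\<dots> \<longleftrightarrow> real (a * 2 ^ M) < real (b * 2 ^ M + (c + 1) * S)" by (simp add: algebra_simps)
  finally show ?thesis by (simp only: of_nat_less_iff)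
qed

locale Theta_approximation =
  fixes V :: "bool list \<Rightarrow> bool list option" and c :: recf and T :: real
    and fa fb fc :: "nat \<Rightarrow> nat"
  assumes computes: "computes c V"
    and T_pos: "0 < T" and T_less_1: "T < 1"
    and computable_approx: "computable fa" "computable fb" "computable fc"
    and approx_tendsto: "(\<lambda>k. (real (fa k) - real (fb k)) / (real (fc k) + 1)) \<longlonglongrightarrow> Theta V T"
    and approx_ge: "\<forall>k\<ge>1. Theta V T \<le> (real (fa k) - real (fb k)) / (real (fc k) + 1)"
    and compressible_nonempty: "\<exists>s. Hc V s < enat (length s)"
begin

definition "compressible = {s. Hc V s < enat (length s)}"

definition "T' = (1 + T) / 2"

lemma T'_bounds: "T < T'" "T' < 1" "0 < T'"
  using T_pos T_less_1 by (auto simp: T'_def)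

lemma Theta_eq: "Theta V T = infsum (weight T) compressible"
  unfolding Theta_eq_infsum_weight compressible_def ..

lemma sum_weight_le_Theta: "finite F \<Longrightarrow> F \<subseteq> compressible \<Longrightarrow> sum (weight T) F \<le> Theta V T"
  unfolding Theta_eq using weight_summable_on[OF T_pos T_less_1]
  by (intro finite_sum_le_infsum) (auto intro: less_imp_le[OF weight_pos])

lemma certified_set_subset_compressible: "certified_set c st \<subseteq> compressible"
  unfolding certified_set_def compressible_def using certified_compressible_sound[OF computes]
  by blast

text \<open>K bounds the derivative of \<Theta> on [T, T'], and slack is chosen with
  ln 2 / T ^ 2 * K < 2 ^ slack.\<close>
definition "K = (SOME K. \<forall>F. finite F \<longrightarrow> (\<Sum>s\<in>F. real (length s) * weight T' s) \<le> K)"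

lemma sum_length_weight_le_K: "finite F \<Longrightarrow> (\<Sum>s\<in>F. real (length s) * weight T' s) \<le> K"
  using someI_ex[OF bounded_length_weighted_sums[OF T'_bounds(3,2)]] unfolding K_def by blast

definition "slack = (SOME e::nat. ln 2 / T\<^sup>2 * K < 2 ^ e)"

lemma slack: "ln 2 / T\<^sup>2 * K < 2 ^ slack"
  unfolding slack_def by (rule someI_ex) (rule real_arch_pow, simp)

definition "n0 = (SOME n0::nat. slack \<le> n0 \<and> (\<forall>n\<ge>n0. 1 / 2 ^ n \<le> T' - T))"

lemma n0: "slack \<le> n0" "n \<ge> n0 \<Longrightarrow> 1 / 2 ^ n \<le> T' - T"
proof -
  obtain m where m: "(1 / 2) ^ m < T' - T"
    using real_arch_pow_inv[of "T' - T" "1 / 2"] T'_bounds by auto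
  have "1 / 2 ^ n \<le> T' - T" if "m \<le> n" for n
  proof -
    have "(1 / 2 :: real) ^ n \<le> (1 / 2) ^ m" using that by (rule power_decreasing) auto
    then show ?thesis using m unfolding power_one_over by linarith
  qed
  then have "\<exists>n0::nat. slack \<le> n0 \<and> (\<forall>n\<ge>n0. 1 / 2 ^ n \<le> T' - T)"
    by (intro exI[of _ "max slack m"]) auto
  from someI_ex[OF this] show "slack \<le> n0" "n \<ge> n0 \<Longrightarrow> 1 / 2 ^ n \<le> T' - T"
    unfolding n0_def by auto
qed

definition "prefix_code n = str_enc (real_prefix T n)"

definition "prefix_value n = value_code (prefix_code n)"

definition "upper n = real (prefix_value n + 1) / 2 ^ n"

lemma length_code_prefix_code [simp]: "length_code (prefix_code n) = n"
  by (simp add: prefix_code_def)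

lemma prefix_value_bounds:
  "real (prefix_value n) \<le> T * 2 ^ n" "T * 2 ^ n < real (prefix_value n) + 1"
proof -
  have "int (prefix_value n) = \<lfloor>T * 2 ^ n\<rfloor>"
    unfolding prefix_value_def prefix_code_def value_code_str_enc
    using bin_value_real_prefix T_pos T_less_1 by simp
  then have "real (prefix_value n) = of_int \<lfloor>T * 2 ^ n\<rfloor>" by (metis of_int_of_nat_eq)
  then show "real (prefix_value n) \<le> T * 2 ^ n" "T * 2 ^ n < real (prefix_value n) + 1" by linarith+
qed

lemma upper_bounds: "T < upper n" "upper n \<le> T + 1 / 2 ^ n"
  unfolding upper_def using prefix_value_bounds[of n] by (simp_all add: field_simps)

lemma upper_le_T': "n \<ge> n0 \<Longrightarrow> upper n \<le> T'"
  using upper_bounds[of n] n0(2)[of n] by auto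

end

definition first_uncertified :: "recf \<Rightarrow> nat \<Rightarrow> nat \<Rightarrow> nat" where
  "first_uncertified c st L =
     2 ^ L - 1 + bounded_min (2 ^ L) (\<lambda>i. \<not> certified_compressible c st (2 ^ L - 1 + i))"

lemma first_uncertified:
  "length (inv str_enc (first_uncertified c st L)) = L \<and>
   \<not> certified_compressible c st (first_uncertified c st L)"
proof -
  let ?i = "bounded_min (2 ^ L) (\<lambda>i. \<not> certified_compressible c st (2 ^ L - 1 + i))"
  have "\<not> certified_compressible c st (2 ^ L - 1 + ?i)" "?i < 2 ^ L"
    using bounded_min_correct[OF uncertified_string_exists] by blast+
  then show ?thesis unfolding first_uncertified_def by (auto intro: length_inv_str_enc)
qed

lemma computable_first_uncertified:
  "computable f \<Longrightarrow> computable g \<Longrightarrow> computable (\<lambda>x. first_uncertified c (f x) (g x))"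
proof -
  have "computable (\<lambda>p. first_uncertified c (pair_fst p) (pair_snd p))"
    unfolding first_uncertified_def
    by (intro computable_add computable_diff computable_bounded_min decidable_not
        decidable_apply_uncurried[OF decidable_certified_compressible] computable_power
        computable_pair_fst computable_pair_snd computable_id computable_const)
  then show "computable f \<Longrightarrow> computable g \<Longrightarrow> computable (\<lambda>x. first_uncertified c (f x) (g x))"
    by (rule computable_apply_uncurried)
qed

context Theta_approximation
begin

definition "approx k = (real (fa k) - real (fb k)) / (real (fc k) + 1)"

text \<open>A witness w codes a triple (k - 1, st, M); the condition says approx k < S / 2 ^ M, where S
  is certified_weight_floor at stage st, a lower bound for \<Theta>_V(u) with
  u = (value_code x + 1) / 2 ^ length_code x.\<close>
definition search_condition :: "nat \<Rightarrow> nat \<Rightarrow> bool" where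
  "search_condition x w \<longleftrightarrow>
     fa (Suc (pair_fst w)) * 2 ^ pair_snd (pair_snd w)
       < fb (Suc (pair_fst w)) * 2 ^ pair_snd (pair_snd w)
         + (fc (Suc (pair_fst w)) + 1) *
           certified_weight_floor c (value_code x + 1) (2 ^ length_code x)
             (pair_fst (pair_snd w)) (pair_snd (pair_snd w))"

definition "output_length x = (value_code x * (length_code x - slack)) div 2 ^ length_code x"

definition "search_output x w = first_uncertified c (pair_fst (pair_snd w)) (output_length x)"

definition "generator x =
  (if \<exists>w. search_condition x w then Some (search_output x (LEAST w. search_condition x w))
   else None)"

lemma partial_recursive_generator: "partial_recursive generator"
  unfolding generator_def[abs_def]
proof (rule partial_recursive_least_search)
  show "decidable (\<lambda>p. search_condition (pair_fst p) (pair_snd p))"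
    unfolding search_condition_def
    by (intro decidable_less computable_mult computable_add computable_power
        computable_compose[OF computable_approx(1)] computable_compose[OF computable_approx(2)]
        computable_compose[OF computable_approx(3)] computable_certified_weight_floor
        computable_Suc computable_pair_fst computable_pair_snd computable_id computable_const
        computable_value_code computable_length_code)
  show "computable (\<lambda>p. search_output (pair_fst p) (pair_snd p))"
    unfolding search_output_def output_length_def
    by (intro computable_first_uncertified computable_div computable_mult computable_diff
        computable_power computable_value_code computable_length_code computable_pair_fst
        computable_pair_snd computable_id computable_const)
qed

lemma search_condition_iff:
  "search_condition (prefix_code n) (prod_encode (k, prod_encode (st, M))) \<longleftrightarrow>
     approx (Suc k) < real (certified_weight_floor c (prefix_value n + 1) (2 ^ n) st M) / 2 ^ M"
  by (simp add: search_condition_def approx_def real_ratio_less_iff prefix_value_def)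

lemma output_length_prefix_code: "output_length (prefix_code n)
    = prefix_value n * (n - slack) div 2 ^ n"
  by (simp add: output_length_def prefix_value_def)

lemma output_length_le:
  assumes "slack \<le> n"
  shows "real (output_length (prefix_code n)) \<le> T * (real n - real slack)"
proof -
  have "real (output_length (prefix_code n))
      \<le> real (prefix_value n * (n - slack)) / real ((2::nat) ^ n)"
    unfolding output_length_prefix_code by (rule of_nat_div_le_of_nat)
  also have "\<dots> = real (prefix_value n) / 2 ^ n * (real n - real slack)"
    using assms by (simp add: of_nat_diff)
  also have "\<dots> \<le> T * (real n - real slack)"
    using prefix_value_bounds(1)[of n] assms by (intro mult_right_mono) (simp_all add: field_simps)
  finally show ?thesis .
qed

lemma output_length_ge:
  assumes "slack \<le> n"
  shows "T * real n - real slack - 2 \<le> real (output_length (prefix_code n))"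
proof -
  define m where "m = prefix_value n * (n - slack)"
  have "real (m div 2 ^ n) = of_int \<lfloor>real m / real ((2::nat) ^ n)\<rfloor>"
    by (metis floor_divide_of_nat_eq of_int_of_nat_eq)
  then have floor: "real m / 2 ^ n - 1 < real (output_length (prefix_code n))"
    unfolding output_length_prefix_code m_def[symmetric] by simp
  have "(T * 2 ^ n - 1) / 2 ^ n \<le> real (prefix_value n) / 2 ^ n"
    using prefix_value_bounds(2)[of n] by (intro divide_right_mono) auto
  then have "T - 1 / 2 ^ n \<le> real (prefix_value n) / 2 ^ n" by (simp add: diff_divide_distrib)
  then have "(T - 1 / 2 ^ n) * (real n - real slack)
      \<le> real (prefix_value n) / 2 ^ n * (real n - real slack)"
    using assms by (intro mult_right_mono) simp_all
  also have "\<dots> = real m / 2 ^ n" unfolding m_def using assms by (simp add: of_nat_diff)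
  finally have lower: "(T - 1 / 2 ^ n) * (real n - real slack) \<le> real m / 2 ^ n" .
  have "(real n - real slack) / 2 ^ n \<le> 1"
  proof -
    have "real n < 2 ^ n" using less_exp[of n] by (metis of_nat_less_numeral_power_cancel_iff)
    then have "real n - real slack \<le> 2 ^ n" by linarith
    then show ?thesis by (simp add: divide_le_eq_1)
  qed
  moreover have "(T - 1 / 2 ^ n) * (real n - real slack) =
      T * (real n - real slack) - (real n - real slack) / 2 ^ n"
    by (simp add: left_diff_distrib)
  ultimately have "T * (real n - real slack) - 1 \<le> real m / 2 ^ n" using lower by linarith
  moreover have "T * real slack \<le> 1 * real slack" using T_less_1 by (intro mult_right_mono) auto
  ultimately show ?thesis using floor by (simp add: right_diff_distrib)
qed

lemma weight_ge_if_length_output: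
  assumes "n \<ge> n0" "length s = output_length (prefix_code n)"
  shows "2 ^ slack / 2 ^ n \<le> weight T s"
proof -
  have "slack \<le> n" using assms(1) n0(1) by simp
  then have "real (length s) / T \<le> real n - real slack"
    using output_length_le assms(2) T_pos by (simp add: divide_le_eq mult.commute)
  then have "2 powr (- (real n - real slack)) \<le> weight T s" unfolding weight_def by simp
  then show ?thesis by (simp add: powr_diff powr_realpow powr_minus_divide)
qed

lemma certified_weight_increment_less:
  assumes "n \<ge> n0"
  shows "(\<Sum>s\<in>certified_set c st. weight (upper n) s - weight T s) < 2 ^ slack / 2 ^ n"
proof -
  let ?S = "\<Sum>s\<in>certified_set c st. real (length s) * weight T' s"
  have "0 \<le> ?S" by (intro sum_nonneg mult_nonneg_nonneg) (auto intro: less_imp_le[OF weight_pos])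
  have "(\<Sum>s\<in>certified_set c st. weight (upper n) s - weight T s)
      \<le> (\<Sum>s\<in>certified_set c st. (upper n - T) * ln 2 / T\<^sup>2 * (real (length s) * weight T' s))"
    using upper_bounds(1)[of n] upper_le_T'[OF assms] T_pos by (intro sum_mono weight_diff_le) auto
  also have "\<dots> = (upper n - T) * ln 2 / T\<^sup>2 * ?S" by (simp add: sum_distrib_left)
  also have "\<dots> \<le> 1 / 2 ^ n * ln 2 / T\<^sup>2 * K"
  proof (rule mult_mono)
    show "(upper n - T) * ln 2 / T\<^sup>2 \<le> 1 / 2 ^ n * ln 2 / T\<^sup>2"
      using upper_bounds[of n] by (intro divide_right_mono mult_right_mono) auto
  qed (use \<open>0 \<le> ?S\<close> sum_length_weight_le_K[OF finite_certified_set] in auto)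
  also have "\<dots> = ln 2 / T\<^sup>2 * K / 2 ^ n" by simp
  also have "\<dots> < 2 ^ slack / 2 ^ n" by (intro divide_strict_right_mono slack) simp
  finally show ?thesis .
qed

lemma search_output_incompressible:
  assumes n: "n \<ge> n0" and w: "search_condition (prefix_code n) w"
  defines "s \<equiv> inv str_enc (search_output (prefix_code n) w)"
  shows "length s = output_length (prefix_code n) \<and> enat (length s) \<le> Hc V s"
proof -
  obtain k st M where w_eq: "w = prod_encode (k, prod_encode (st, M))"
    by (metis prod_decode_inverse surj_pair)
  have s: "length s = output_length (prefix_code n)" "s \<notin> certified_set c st"
    using first_uncertified[of c st "output_length (prefix_code n)"]
    unfolding s_def search_output_def w_eq certified_set_def by auto
  have "\<not> Hc V s < enat (length s)"
  proof
    assume "Hc V s < enat (length s)"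
    then have "insert s (certified_set c st) \<subseteq> compressible"
      using certified_set_subset_compressible unfolding compressible_def by auto
    then have "weight T s + (\<Sum>s\<in>certified_set c st. weight T s) \<le> Theta V T"
      using sum_weight_le_Theta[of "insert s (certified_set c st)"] s(2) finite_certified_set
      by simp
    also have "\<dots> \<le> approx (Suc k)" using approx_ge unfolding approx_def by simp
    also have "\<dots> < real (certified_weight_floor c (prefix_value n + 1) (2 ^ n) st M) / 2 ^ M"
      using w unfolding w_eq search_condition_iff .
    also have "\<dots> \<le> (\<Sum>s\<in>certified_set c st. weight (upper n) s)"
      using certified_weight_floor_le[of "prefix_value n + 1" "2 ^ n" c st M]
      by (simp add: upper_def)
    finally have "weight T s < (\<Sum>s\<in>certified_set c st. weight (upper n) s - weight T s)"
      by (simp add: sum_subtractf)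
    also have "\<dots> < 2 ^ slack / 2 ^ n" by (rule certified_weight_increment_less[OF n])
    also have "\<dots> \<le> weight T s" by (rule weight_ge_if_length_output[OF n s(1)])
    finally show False by simp
  qed
  with s(1) show ?thesis by simp
qed

end

context Theta_approximation
begin

lemma Theta_less_Theta_upper: "n \<ge> n0 \<Longrightarrow> Theta V T < infsum (weight (upper n)) compressible"
proof -
  assume "n \<ge> n0"
  then have u: "T < upper n" "upper n < 1"
    using upper_bounds(1)[of n] upper_le_T'[of n] T'_bounds(2) by simp_all
  obtain s where s: "Hc V s < enat (length s)" using compressible_nonempty by blast
  then have "s \<noteq> []" by (cases s) (auto simp: zero_enat_def[symmetric])
  with s have "Theta V T + (weight (upper n) s - weight T s)
      \<le> infsum (weight (upper n)) compressible"
    unfolding Theta_eq using u T_pos by (intro infsum_weight_gap) (auto simp: compressible_def)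
  moreover have "weight T s < weight (upper n) s" using weight_strict_mono[OF T_pos u(1) \<open>s \<noteq> []\<close>] .
  ultimately show ?thesis by linarith
qed

lemma certified_weight_floor_exceeds:
  assumes ab: "0 < a" "0 < b" "a < b" and x: "x < infsum (weight (real a / real b)) compressible"
  shows "\<exists>st M. x < real (certified_weight_floor c a b st M) / 2 ^ M"
proof -
  define u where "u = real a / real b"
  define \<delta> where "\<delta> = infsum (weight u) compressible - x"
  have "0 < \<delta>" using x unfolding \<delta>_def u_def by simp
  have "weight u summable_on compressible" using ab
    by (intro weight_summable_on) (simp_all add: u_def)
  then obtain F where F: "finite F" "F \<subseteq> compressible"
      "infsum (weight u) compressible - \<delta> / 2 < sum (weight u) F"
    using infsum_finite_approx[of "weight u" compressible "\<delta> / 2"] \<open>0 < \<delta>\<close> by auto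
  have "\<forall>\<^sub>F st in sequentially. \<forall>s\<in>F. certified_compressible c st (str_enc s)"
    using F(1,2) certified_compressible_eventually[OF computes]
    by (intro eventually_ball_finite) (auto simp: compressible_def)
  then obtain st where "F \<subseteq> certified_set c st"
    unfolding certified_set_def eventually_sequentially by blast
  from certified_weight_floor_ge[OF ab(1,2) this]
  have floor_ge: "sum (weight u) F - real (card F) / 2 ^ M
      \<le> real (certified_weight_floor c a b st M) / 2 ^ M"
    for M unfolding u_def .
  obtain M :: nat where "real (card F) * 2 / \<delta> < 2 ^ M" using real_arch_pow[of 2] by auto
  then have "real (card F) / 2 ^ M < \<delta> / 2" using \<open>0 < \<delta>\<close> by (simp add: field_simps)
  then have "x < real (certified_weight_floor c a b st M) / 2 ^ M"
    using F(3) floor_ge[of M] \<delta>_def by linarith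
  then show ?thesis by blast
qed

lemma search_condition_exists:
  assumes "n \<ge> n0"
  shows "\<exists>w. search_condition (prefix_code n) w"
proof -
  define x where "x = (Theta V T + infsum (weight (upper n)) compressible) / 2"
  have x: "Theta V T < x" "x < infsum (weight (upper n)) compressible"
    using Theta_less_Theta_upper[OF assms] unfolding x_def by auto
  have "upper n < 1" using upper_le_T'[OF assms] T'_bounds by simp
  then have "real (prefix_value n + 1) < real (2 ^ n)" unfolding upper_def
    by (simp add: divide_less_eq)
  then have "prefix_value n + 1 < 2 ^ n" by (simp only: of_nat_less_iff)
  with x(2) obtain st M
    where "x < real (certified_weight_floor c (prefix_value n + 1) (2 ^ n) st M) / 2 ^ M"
    using certified_weight_floor_exceeds[of "prefix_value n + 1" "2 ^ n" x]
    by (auto simp: upper_def)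
  moreover obtain k where "approx (Suc k) < x"
  proof -
    have "\<forall>\<^sub>F k in sequentially. approx k < x"
      using order_tendstoD(2)[OF approx_tendsto x(1)] unfolding approx_def .
    then obtain k where "\<forall>k'\<ge>k. approx k' < x" unfolding eventually_sequentially by blast
    then show thesis using that[of k] by simp
  qed
  ultimately have "search_condition (prefix_code n) (prod_encode (k, prod_encode (st, M)))"
    unfolding search_condition_iff by simp
  then show ?thesis by blast
qed

lemma generator_prefix:
  assumes "n \<ge> n0"
  shows "\<exists>s. generator (str_enc (real_prefix T n)) = Some (str_enc s) \<and>
    T * real n - real (slack + 2) \<le> real (length s) \<and> enat (length s) \<le> Hc V s"
proof -
  let ?w = "LEAST w. search_condition (prefix_code n) w"
  let ?s = "inv str_enc (search_output (prefix_code n) ?w)"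
  have "search_condition (prefix_code n) ?w" using search_condition_exists[OF assms]
    by (rule LeastI_ex)
  then have s: "length ?s = output_length (prefix_code n) \<and> enat (length ?s) \<le> Hc V ?s"
    by (rule search_output_incompressible[OF assms])
  have "generator (str_enc (real_prefix T n)) = Some (str_enc ?s)"
    unfolding generator_def prefix_code_def[symmetric] using search_condition_exists[OF assms]
    by simp
  moreover have "T * real n - real (slack + 2) \<le> real (length ?s)"
    using output_length_ge[of n] n0(1) assms s by simp
  ultimately show ?thesis using s by blast
qed

end

lemma right_computable_approx:
  assumes "right_computable x"
  obtains fa fb fc where "computable fa" "computable fb" "computable fc"
    "(\<lambda>k. (real (fa k) - real (fb k)) / (real (fc k) + 1)) \<longlonglongrightarrow> x"
    "\<forall>k\<ge>1. x \<le> (real (fa k) - real (fb k)) / (real (fc k) + 1)"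
proof -
  obtain f where f: "computable_rat_seq f" "\<forall>n\<ge>1. x \<le> of_rat (f n)" "(\<lambda>n. of_rat (f n)) \<longlonglongrightarrow> x"
    using assms unfolding right_computable_def by blast
  obtain fa fb fc where abc: "total_recursive fa" "total_recursive fb" "total_recursive fc"
    "\<forall>n. f n = (of_int (int (fa n) - int (fb n))) / of_nat (Suc (fc n))"
    using f(1) unfolding computable_rat_seq_def by blast
  have "(of_rat (f n) :: real) = (real (fa n) - real (fb n)) / (real (fc n) + 1)" for n
    using abc(4) by (simp add: of_rat_divide of_rat_diff of_rat_add add.commute)
  with f(2,3) abc(1-3) show thesis by (intro that computable_if_total_recursive) simp_all
qed

text \<open>Composing the map with U, optimality of V gives H_V(s) \<le> H_U(\<alpha> \<restriction> n) + O(1).\<close>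
lemma weakly_chaitin_random_if_incompressible_images:
  assumes U: "prefix_free_machine U" and V: "optimal_machine V" and T: "0 \<le> T"
    and \<phi>: "partial_recursive \<phi>"
    and images: "\<And>n. n \<ge> n0 \<Longrightarrow> \<exists>s. \<phi> (str_enc (real_prefix \<alpha> n)) = Some (str_enc s) \<and>
        T * real n - real c0 \<le> real (length s) \<and> enat (length s) \<le> Hc V s"
  shows "weakly_chaitin_random U T \<alpha>"
proof -
  let ?C = "\<lambda>p. Option.bind (U p) (\<lambda>s. map_option (inv str_enc) (\<phi> (str_enc s)))"
  obtain d where d: "\<And>p s. ?C p = Some s \<Longrightarrow> Hc V s \<le> enat (length p + d)"
    using Hc_optimal_le[OF V prefix_free_machine_bind[OF U \<phi>]] by blast
  define c where "c = nat \<lceil>T * real n0\<rceil> + c0 + d"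
  have "T * real n - real c \<le> real h" if h: "Hc U (real_prefix \<alpha> n) = enat h" for n h
  proof (cases "n \<ge> n0")
    case False
    then have "T * real n \<le> T * real n0" using T by (intro mult_left_mono) auto
    also have "\<dots> \<le> real (nat \<lceil>T * real n0\<rceil>)" by linarith
    finally show ?thesis unfolding c_def by simp
  next
    case True
    obtain p where p: "U p = Some (real_prefix \<alpha> n)" "length p = h" using Hc_attained[OF h] by blast
    obtain s where s: "\<phi> (str_enc (real_prefix \<alpha> n)) = Some (str_enc s)"
        "T * real n - real c0 \<le> real (length s)" "enat (length s) \<le> Hc V s"
      using images[OF True] by blast
    have "Hc V s \<le> enat (h + d)" using d[of p s] p s(1) by simp
    with s(3) have "enat (length s) \<le> enat (h + d)" by (rule order_trans)
    then show ?thesis using s(2) unfolding c_def by simp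
  qed
  then show ?thesis unfolding weakly_chaitin_random_def
    by (intro exI[of _ c] allI impI) (auto split: enat.split)
qed

theorem theorem10:
  fixes U V :: "bool list \<Rightarrow> bool list option" and T :: real
  assumes "optimal_machine U"
    and "optimal_machine V"
    and "0 < T" and "T < 1"
    and "right_computable (Theta V T)"
  shows "weakly_chaitin_random U T T"
proof -
  obtain fa fb fc where approx: "computable fa" "computable fb" "computable fc"
    "(\<lambda>k. (real (fa k) - real (fb k)) / (real (fc k) + 1)) \<longlonglongrightarrow> Theta V T"
    "\<forall>k\<ge>1. Theta V T \<le> (real (fa k) - real (fb k)) / (real (fc k) + 1)"
    using right_computable_approx[OF assms(5)] by blast
  obtain c where "computes c V"
    using assms(2) computes_exists unfolding optimal_machine_def prefix_free_machine_def by blast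
  then interpret Theta_approximation V c T fa fb fc
    using assms(3,4) approx compressible_string_exists[OF assms(2)] by unfold_locales
  show ?thesis
    using assms(1,3) unfolding optimal_machine_def
    by (intro weakly_chaitin_random_if_incompressible_images[OF _ assms(2) _
          partial_recursive_generator generator_prefix]) auto
qed

end
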